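(* Let $0<r<1$ and let $\underline{T}=(T_1,\dots,T_d)$ be a tuple of invertible operators on a Hilbert space $\mathcal H$. Then $\underline{T}$ is a doubly commuting tuple of operators in $QA_r$ if and only if there exist a tuple $(U_1,\dots,U_d)$ of commuting unitaries and a tuple $(D_1,\dots,D_d)$ of commuting self-adjoint operators on $\mathcal H$ such that $\sigma(D_j)\subseteq\overline{A_r}$ for each $j$, $D_iU_j=U_jD_i$ for $1\le i,j\le d$ with $i\ne j$, and $T_j=U_jD_j$ for $1\le j\le d$.
   Context: $QA_r=\{T: T\text{ invertible},\ \|rT\|\le1,\ \|rT^{-1}\|\le1\}$. $A_r=\{z\in\mathbb C: r<|z|<r^{-1}\}$ and $\overline{A_r}$ is its closure. A tuple is doubly commuting if $T_iT_j=T_jT_i$ for all $i,j$ and $T_iT_j^*=T_j^*T_i$ for $i\ne j$. *)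

theory Defs
  imports "HOL-Analysis.Analysis"
begin

class chilbert_space = banach +
  fixes scaleC :: "complex \<Rightarrow> 'a \<Rightarrow> 'a"
    and cinner :: "'a \<Rightarrow> 'a \<Rightarrow> complex"
  assumes scaleC_scaleR: "scaleC (of_real t) x = scaleR t x"
    and scaleC_add_right: "scaleC a (x + y) = scaleC a x + scaleC a y"
    and scaleC_add_left: "scaleC (a + b) x = scaleC a x + scaleC b x"
    and scaleC_scaleC: "scaleC a (scaleC b x) = scaleC (a * b) x"
    and scaleC_one: "scaleC 1 x = x"
    and cinner_commute: "cinner x y = cnj (cinner y x)"
    and cinner_add_left: "cinner (x + y) z = cinner x z + cinner y z"
    and cinner_scaleC_left: "cinner (scaleC a x) y = cnj a * cinner x y"
    and cinner_self_norm: "cinner x x = complex_of_real ((norm x)\<^sup>2)"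

definition clinear_op :: "('a::chilbert_space \<Rightarrow> 'a) \<Rightarrow> bool" where
  "clinear_op T \<longleftrightarrow> (\<forall>x y. T (x + y) = T x + T y) \<and> (\<forall>c x. T (scaleC c x) = scaleC c (T x))"

definition bounded_op :: "('a::chilbert_space \<Rightarrow> 'a) \<Rightarrow> bool" where
  "bounded_op T \<longleftrightarrow> clinear_op T \<and> (\<exists>K. \<forall>x. norm (T x) \<le> norm x * K)"

definition adj :: "('a::chilbert_space \<Rightarrow> 'a) \<Rightarrow> ('a \<Rightarrow> 'a)" where
  "adj T = (SOME S. bounded_op S \<and> (\<forall>x y. cinner (T x) y = cinner x (S y)))"

definition op_invertible :: "('a::chilbert_space \<Rightarrow> 'a) \<Rightarrow> bool" where
  "op_invertible T \<longleftrightarrow> bounded_op T \<and> (\<exists>S. bounded_op S \<and> S \<circ> T = id \<and> T \<circ> S = id)"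

definition op_spectrum :: "('a::chilbert_space \<Rightarrow> 'a) \<Rightarrow> complex set" where
  "op_spectrum T = {c. \<not> op_invertible (\<lambda>x. T x - scaleC c x)}"

definition unitary_op :: "('a::chilbert_space \<Rightarrow> 'a) \<Rightarrow> bool" where
  "unitary_op U \<longleftrightarrow> bounded_op U \<and> adj U \<circ> U = id \<and> U \<circ> adj U = id"

definition selfadjoint_op :: "('a::chilbert_space \<Rightarrow> 'a) \<Rightarrow> bool" where
  "selfadjoint_op D \<longleftrightarrow> bounded_op D \<and> adj D = D"

definition QA :: "real \<Rightarrow> ('a::chilbert_space \<Rightarrow> 'a) set" where
  "QA r = {T. op_invertible T \<and> onorm (\<lambda>x. r *\<^sub>R T x) \<le> 1 \<and> onorm (\<lambda>x. r *\<^sub>R inv T x) \<le> 1}"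

definition annulus :: "real \<Rightarrow> complex set" where
  "annulus r = {z. r < cmod z \<and> cmod z < 1 / r}"

definition commuting_tuple :: "nat \<Rightarrow> (nat \<Rightarrow> ('a \<Rightarrow> 'a)) \<Rightarrow> bool" where
  "commuting_tuple d T \<longleftrightarrow> (\<forall>i\<in>{1..d}. \<forall>j\<in>{1..d}. T i \<circ> T j = T j \<circ> T i)"

definition doubly_commuting :: "nat \<Rightarrow> (nat \<Rightarrow> ('a::chilbert_space \<Rightarrow> 'a)) \<Rightarrow> bool" where
  "doubly_commuting d T \<longleftrightarrow> commuting_tuple d T \<and>
     (\<forall>i\<in>{1..d}. \<forall>j\<in>{1..d}. i \<noteq> j \<longrightarrow> T i \<circ> adj (T j) = adj (T j) \<circ> T i)"

end

(* If T is invertible with r |T| <= 1 and r |T^-1| <= 1, then r^2 <= T*T <= r^-2, so T*T has a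
   positive square root D = |T| with |D x| = |T x|.  Hence D is invertible with the same norm
   bounds as T, its spectrum lies in the closed annulus, and U = T D^-1 is unitary.  Since D lies
   in the bicommutant of T*T, double commutativity of the tuple makes D_i commute with T_j, D_j
   and U_j for i <> j, and the U_j commute with each other.
   Conversely, the norm of a self-adjoint operator is its spectral radius, so a self-adjoint D
   with spectrum in the closed annulus satisfies |D|, |D^-1| <= 1/r, whence U D is in QA_r; the
   commutation relations between the factors give double commutativity of the products.
   Without a spectral theorem, the square root of A = M (I - B), |B| < 1, is built directly as
   sqrt M (I - Y), where Y is the fixed point of the contraction Y |-> (B + Y^2)/2 on the
   bicommutant of B; adjoints come from the Riesz representation theorem. *)

theory Submission
  imports Defs
begin

section \<open>Complex inner product spaces\<close>

lemma scaleC_zero_left [simp]: "scaleC 0 (x::'a::chilbert_space) = 0"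
  using scaleC_scaleR[of 0 x] by simp

lemma scaleC_zero_right [simp]: "scaleC c (0::'a::chilbert_space) = 0"
  using scaleC_add_right[of c "0::'a" 0] by simp

lemma scaleC_minus_left: "scaleC (-c) (x::'a::chilbert_space) = - scaleC c x"
  using scaleC_add_left[of c "-c" x] by (simp add: eq_neg_iff_add_eq_0 add.commute)

lemma scaleC_minus_right: "scaleC c (-x::'a::chilbert_space) = - scaleC c x"
  using scaleC_add_right[of c x "-x"] by (simp add: eq_neg_iff_add_eq_0 add.commute)

lemma scaleC_diff_right: "scaleC c (x - y::'a::chilbert_space) = scaleC c x - scaleC c y"
  using scaleC_add_right[of c x "-y"] scaleC_minus_right[of c y] by simp

lemma cinner_zero_left [simp]: "cinner 0 (y::'a::chilbert_space) = 0"
  using cinner_add_left[of "0::'a" 0 y] by simp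

lemma cinner_add_right: "cinner (x::'a::chilbert_space) (y + z) = cinner x y + cinner x z"
  by (metis cinner_commute cinner_add_left complex_cnj_add)

lemma cinner_scaleC_right: "cinner (x::'a::chilbert_space) (scaleC a y) = a * cinner x y"
  by (metis cinner_commute cinner_scaleC_left complex_cnj_cnj complex_cnj_mult)

lemma cinner_zero_right [simp]: "cinner (x::'a::chilbert_space) 0 = 0"
  using cinner_add_right[of x "0::'a" 0] by simp

lemma cinner_minus_left: "cinner (-x) (y::'a::chilbert_space) = - cinner x y"
  using cinner_add_left[of x "-x" y] by (simp add: eq_neg_iff_add_eq_0 add.commute)

lemma cinner_minus_right: "cinner (x::'a::chilbert_space) (-y) = - cinner x y"
  using cinner_add_right[of x y "-y"] by (simp add: eq_neg_iff_add_eq_0 add.commute)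

lemma cinner_diff_left: "cinner (x - y) (z::'a::chilbert_space) = cinner x z - cinner y z"
  using cinner_add_left[of x "-y" z] cinner_minus_left[of y z] by simp

lemma cinner_diff_right: "cinner (x::'a::chilbert_space) (y - z) = cinner x y - cinner x z"
  using cinner_add_right[of x y "-z"] cinner_minus_right[of x z] by simp

lemma cinner_scaleR_left: "cinner (t *\<^sub>R x) (y::'a::chilbert_space) = of_real t * cinner x y"
  using cinner_scaleC_left[of "of_real t" x y] by (simp add: scaleC_scaleR)

lemma cinner_scaleR_right: "cinner (x::'a::chilbert_space) (t *\<^sub>R y) = of_real t * cinner x y"
  using cinner_scaleC_right[of x "of_real t" y] by (simp add: scaleC_scaleR)

lemma Re_cinner_self: "Re (cinner x (x::'a::chilbert_space)) = (norm x)\<^sup>2"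
  by (simp add: cinner_self_norm)

lemma cinner_ext:
  fixes y z :: "'a::chilbert_space"
  assumes "\<And>x. cinner x y = cinner x z"
  shows "y = z"
proof -
  have "cinner (y - z) (y - z) = 0"
    using assms[of "y - z"] by (simp add: cinner_diff_right)
  then show ?thesis by (simp add: cinner_self_norm)
qed

lemma norm_eq_if_cinner_self_eq:
  fixes x y :: "'a::chilbert_space"
  assumes "cinner x x = cinner y y"
  shows "norm x = norm y"
proof -
  have "(norm x)\<^sup>2 = (norm y)\<^sup>2"
    using arg_cong[OF assms, of Re] by (simp only: Re_cinner_self)
  then show ?thesis by (rule power2_eq_imp_eq) auto
qed

lemma norm_scaleC: "norm (scaleC c (x::'a::chilbert_space)) = cmod c * norm x"
proof -
  have "cinner (scaleC c x) (scaleC c x) = cnj c * c * cinner x x"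
    by (simp add: cinner_scaleC_left cinner_scaleC_right)
  also have "cnj c * c = of_real ((cmod c)\<^sup>2)"
    by (metis complex_norm_square mult.commute of_real_power)
  finally have "(norm (scaleC c x))\<^sup>2 = (cmod c * norm x)\<^sup>2"
    by (metis cinner_self_norm of_real_eq_iff of_real_mult power_mult_distrib)
  then show ?thesis by (simp add: power2_eq_imp_eq)
qed

lemma power2_norm_add:
  "(norm (x + y::'a::chilbert_space))\<^sup>2 = (norm x)\<^sup>2 + (norm y)\<^sup>2 + 2 * Re (cinner x y)"
proof -
  have "cinner (x + y) (x + y) = cinner x x + cinner y y + (cinner x y + cnj (cinner x y))"
    by (simp add: cinner_add_left cinner_add_right cinner_commute[of y x])
  then show ?thesis by (simp add: Re_cinner_self[symmetric])
qed

lemma power2_norm_diff: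
  "(norm (x - y::'a::chilbert_space))\<^sup>2 = (norm x)\<^sup>2 + (norm y)\<^sup>2 - 2 * Re (cinner x y)"
  using power2_norm_add[of x "-y"] by (simp add: cinner_minus_right)

lemma quadratic_nonneg_imp_le:
  fixes a b k :: real
  assumes "\<And>t. 0 \<le> a - 2 * t * k + t\<^sup>2 * k * b" and "0 \<le> k" and "0 \<le> b"
  shows "k \<le> a * b"
proof (cases "b > 0")
  case True
  have "0 \<le> a - 2 * (1 / b) * k + (1 / b)\<^sup>2 * k * b" by (rule assms(1))
  also have "\<dots> = a - k / b" using True by (simp add: field_simps power2_eq_square)
  finally show ?thesis using True by (simp add: field_simps)
next
  case False
  then have b: "b = 0" using assms by simp
  show ?thesis
  proof (rule ccontr)
    assume "\<not> ?thesis"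
    then have "k > 0" using b by simp
    have "0 \<le> a - 2 * ((a + 1) / (2 * k)) * k + ((a + 1) / (2 * k))\<^sup>2 * k * b" by (rule assms(1))
    also have "\<dots> = -1" using \<open>k > 0\<close> b by (simp add: field_simps)
    finally show False by simp
  qed
qed

lemma sesquilinear_Cauchy_Schwarz:
  fixes q :: "'a::chilbert_space \<Rightarrow> 'a \<Rightarrow> complex"
  assumes herm: "\<And>x y. q x y = cnj (q y x)"
    and add_left: "\<And>x y z. q (x + y) z = q x z + q y z"
    and scaleC_left: "\<And>a x y. q (scaleC a x) y = cnj a * q x y"
    and pos: "\<And>x. 0 \<le> Re (q x x)"
  shows "(cmod (q x y))\<^sup>2 \<le> Re (q x x) * Re (q y y)"
proof -
  have add_right: "\<And>x y z. q x (y + z) = q x y + q x z"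
    by (metis herm add_left complex_cnj_add)
  have scaleC_right: "\<And>a x y. q x (scaleC a y) = a * q x y"
    by (metis herm scaleC_left complex_cnj_cnj complex_cnj_mult)
  define c where "c = q x y"
  define k where "k = (cmod c)\<^sup>2"
  have qyx: "q y x = cnj c" unfolding c_def by (rule herm)
  have real: "q z z = of_real (Re (q z z))" for z
  proof -
    have "Im (q z z) = Im (cnj (q z z))" using herm[of z z] by (rule arg_cong)
    then have "Im (q z z) = 0" by simp
    then show ?thesis by (simp add: complex_eq_iff)
  qed
  have ck: "c * cnj c = of_real k" unfolding k_def by (rule complex_norm_square[symmetric])
  have "0 \<le> Re (q x x) - 2 * t * k + t\<^sup>2 * k * Re (q y y)" for t
  proof -
    define l where "l = - of_real t * cnj c"
    have "q (x + scaleC l y) (x + scaleC l y)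
        = q x x + l * q x y + cnj l * q y x + cnj l * (l * q y y)"
      unfolding add_left add_right scaleC_left scaleC_right by (simp add: algebra_simps)
    also have "\<dots> = q x x - of_real (t * k) - of_real (t * k) + of_real (t\<^sup>2 * k) * q y y"
    proof -
      have "l * q x y = - of_real t * (c * cnj c)" by (simp add: l_def c_def)
      moreover have "cnj l * q y x = - of_real t * (c * cnj c)" by (simp add: l_def qyx)
      moreover have "cnj l * l = of_real (t\<^sup>2) * (c * cnj c)" by (simp add: l_def power2_eq_square)
      ultimately show ?thesis unfolding ck by (simp add: mult.assoc[symmetric])
    qed
    finally have "Re (q (x + scaleC l y) (x + scaleC l y))
        = Re (q x x) - 2 * t * k + t\<^sup>2 * k * Re (q y y)"
      by (subst (asm) real[of y]) simp
    then show ?thesis using pos by metis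
  qed
  from quadratic_nonneg_imp_le[OF this] pos[of y] show ?thesis by (simp add: k_def c_def)
qed

lemma cinner_Cauchy_Schwarz: "cmod (cinner x (y::'a::chilbert_space)) \<le> norm x * norm y"
proof -
  have "(cmod (cinner x y))\<^sup>2 \<le> Re (cinner x x) * Re (cinner y y)"
    by (rule sesquilinear_Cauchy_Schwarz, rule cinner_commute, rule cinner_add_left,
        rule cinner_scaleC_left, simp add: Re_cinner_self)
  also have "\<dots> = (norm x * norm y)\<^sup>2" by (simp add: Re_cinner_self power_mult_distrib)
  finally show ?thesis by (rule power2_le_imp_le) simp
qed


section \<open>Riesz representation\<close>

lemma Cauchy_minimizing_sequence:
  fixes xs :: "nat \<Rightarrow> 'a::chilbert_space"
  assumes midpoint: "\<And>m n. 4 * \<delta> \<le> (norm (xs m + xs n))\<^sup>2"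
    and minimizing: "\<And>n. (norm (xs n))\<^sup>2 < \<delta> + 1 / Suc n"
  shows "Cauchy xs"
proof (rule metric_CauchyI)
  fix e :: real assume e: "e > 0"
  obtain N :: nat where N: "4 / e\<^sup>2 < real N" using reals_Archimedean2 by blast
  have "dist (xs m) (xs n) < e" if "m \<ge> N" "n \<ge> N" for m n
  proof -
    have "(norm (xs m - xs n))\<^sup>2 = 2 * (norm (xs m))\<^sup>2 + 2 * (norm (xs n))\<^sup>2 - (norm (xs m + xs n))\<^sup>2"
      by (simp add: power2_norm_add power2_norm_diff)
    also have "\<dots> \<le> 2 / Suc m + 2 / Suc n"
      using minimizing[of m] minimizing[of n] midpoint[of m n] by simp
    also have "\<dots> \<le> 2 / Suc N + 2 / Suc N"
      using that by (intro add_mono divide_left_mono) auto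
    also have "\<dots> = 4 / Suc N" by simp
    also have "\<dots> < e\<^sup>2"
    proof -
      have "4 / e\<^sup>2 < real (Suc N)" using N by simp
      then have "4 < e\<^sup>2 * real (Suc N)" using e by (simp add: field_simps)
      then show ?thesis by (simp only: pos_divide_less_eq of_nat_0_less_iff zero_less_Suc)
    qed
    finally have "(norm (xs m - xs n))\<^sup>2 < e\<^sup>2" .
    then show ?thesis using e by (simp add: dist_norm power_less_imp_less_base)
  qed
  then show "\<exists>M. \<forall>m\<ge>M. \<forall>n\<ge>M. dist (xs m) (xs n) < e" by blast
qed

lemma cinner_eq_0_if_norm_le_add:
  fixes z v :: "'a::chilbert_space"
  assumes "\<And>c. norm z \<le> norm (z + scaleC c v)"
  shows "cinner z v = 0"
proof -
  define k where "k = (cmod (cinner z v))\<^sup>2"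
  have "0 \<le> 0 - 2 * t * k + t\<^sup>2 * k * (norm v)\<^sup>2" for t
  proof -
    define c where "c = - of_real t * cnj (cinner z v)"
    have "cnj (cinner z v) * cinner z v = of_real k"
      using complex_norm_square[of "cinner z v"] by (simp add: k_def mult.commute)
    then have "c * cinner z v = - of_real (t * k)"
      by (simp add: c_def)
    moreover have "(cmod c)\<^sup>2 = t\<^sup>2 * k"
      by (simp add: c_def k_def norm_mult power_mult_distrib)
    moreover have "(norm z)\<^sup>2 \<le> (norm (z + scaleC c v))\<^sup>2"
      using assms[of c] by (simp add: power_mono)
    ultimately show ?thesis
      by (simp add: power2_norm_add norm_scaleC cinner_scaleC_right power_mult_distrib)
  qed
  from quadratic_nonneg_imp_le[OF this] have "k \<le> 0" by (simp add: k_def)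
  then show ?thesis by (simp add: k_def)
qed

lemma minimal_norm_in_level_set:
  fixes f :: "'a::chilbert_space \<Rightarrow> complex"
  assumes lin: "bounded_linear f" and hom: "\<And>c x. f (scaleC c x) = c * f x" and "f u \<noteq> 0"
  shows "\<exists>z. f z = 1 \<and> (\<forall>w. f w = 1 \<longrightarrow> norm z \<le> norm w)"
proof -
  interpret f: bounded_linear f by (rule lin)
  define H where "H = {x. f x = 1}"
  define \<delta> where "\<delta> = (INF x\<in>H. (norm x)\<^sup>2)"
  have "scaleC (1 / f u) u \<in> H" using \<open>f u \<noteq> 0\<close> by (simp add: H_def hom)
  then have "H \<noteq> {}" by blast
  have bdd: "bdd_below ((\<lambda>x. (norm x)\<^sup>2) ` H)" by (rule bdd_belowI[of _ 0]) auto
  have lower: "\<delta> \<le> (norm x)\<^sup>2" if "x \<in> H" for x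
    unfolding \<delta>_def using bdd that by (rule cINF_lower)
  have "\<exists>x\<in>H. (norm x)\<^sup>2 < \<delta> + 1 / Suc n" for n
    using cINF_less_iff[OF \<open>H \<noteq> {}\<close> bdd, of "\<delta> + 1 / Suc n"] by (simp add: \<delta>_def)
  then obtain xs where xs: "\<And>n. xs n \<in> H" and xs_small: "\<And>n. (norm (xs n))\<^sup>2 < \<delta> + 1 / Suc n"
    by metis
  have "4 * \<delta> \<le> (norm (xs m + xs n))\<^sup>2" for m n
  proof -
    have "(1/2) *\<^sub>R (xs m + xs n) \<in> H" using xs by (simp add: H_def f.add f.scaleR scaleR_conv_of_real)
    then show ?thesis using lower by (fastforce simp: power2_eq_square)
  qed
  then have "Cauchy xs" using xs_small by (rule Cauchy_minimizing_sequence)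
  then obtain z where lim: "xs \<longlonglongrightarrow> z" using Cauchy_convergent_iff convergent_def by blast
  have "(\<lambda>n. f (xs n)) \<longlonglongrightarrow> f z" by (rule f.tendsto[OF lim])
  moreover have "(\<lambda>n. f (xs n)) = (\<lambda>n. 1)" using xs by (auto simp: H_def)
  ultimately have "f z = 1" using LIMSEQ_unique[OF tendsto_const] by metis
  moreover have "(norm z)\<^sup>2 \<le> \<delta>"
  proof (rule LIMSEQ_le)
    show "(\<lambda>n. (norm (xs n))\<^sup>2) \<longlonglongrightarrow> (norm z)\<^sup>2" by (intro tendsto_intros lim)
    show "(\<lambda>n. \<delta> + 1 / Suc n) \<longlonglongrightarrow> \<delta>"
      using tendsto_add[OF tendsto_const LIMSEQ_Suc[OF lim_inverse_n']] by (simp add: divide_inverse)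
    show "\<exists>N. \<forall>n\<ge>N. (norm (xs n))\<^sup>2 \<le> \<delta> + 1 / Suc n" using xs_small less_imp_le by blast
  qed
  then have "norm z \<le> norm w" if "f w = 1" for w
    using lower[of w] that by (simp add: H_def power2_le_imp_le)
  ultimately show ?thesis by blast
qed

lemma Riesz_representation:
  fixes f :: "'a::chilbert_space \<Rightarrow> complex"
  assumes lin: "bounded_linear f" and hom: "\<And>c x. f (scaleC c x) = c * f x"
  shows "\<exists>z. \<forall>x. f x = cinner z x"
proof (cases "\<forall>x. f x = 0")
  case True
  then show ?thesis by (intro exI[of _ 0]) simp
next
  case False
  interpret f: bounded_linear f by (rule lin)
  obtain z where fz: "f z = 1" and min: "\<And>w. f w = 1 \<Longrightarrow> norm z \<le> norm w"
    using minimal_norm_in_level_set[OF lin hom] False by blast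
  have orth: "cinner z v = 0" if "f v = 0" for v
    by (rule cinner_eq_0_if_norm_le_add) (simp add: min f.add hom fz that)
  have "z \<noteq> 0" using fz by auto
  then have nz: "(norm z)\<^sup>2 \<noteq> 0" by simp
  \<comment> \<open>\<open>x - f x z\<close> lies in the kernel of \<open>f\<close>, hence is orthogonal to \<open>z\<close>\<close>
  have "cinner z x = f x * of_real ((norm z)\<^sup>2)" for x
    using orth[of "x - scaleC (f x) z"]
    by (simp add: f.diff hom fz cinner_diff_right cinner_scaleC_right cinner_self_norm)
  then have "f x = cinner (scaleC (of_real (1 / (norm z)\<^sup>2)) z) x" for x
    using nz by (simp add: cinner_scaleC_left field_simps)
  then show ?thesis by blast
qed

section \<open>Bounded operators\<close>

lemma clinear_add: "clinear_op T \<Longrightarrow> T (x + y) = T x + T y"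
  by (simp add: clinear_op_def)

lemma clinear_scaleC: "clinear_op T \<Longrightarrow> T (scaleC c x) = scaleC c (T x)"
  by (simp add: clinear_op_def)

lemma clinear_zero: "clinear_op T \<Longrightarrow> T 0 = 0"
  using clinear_add[of T 0 0] by simp

lemma clinear_diff: "clinear_op T \<Longrightarrow> T (x - y) = T x - T y"
  by (metis add_diff_cancel clinear_add diff_add_cancel)

lemma clinear_scaleR: "clinear_op T \<Longrightarrow> T (t *\<^sub>R x) = t *\<^sub>R T x"
  using clinear_scaleC[of T "of_real t" x] by (simp add: scaleC_scaleR)

lemma bounded_op_clinear: "bounded_op T \<Longrightarrow> clinear_op T"
  by (simp add: bounded_op_def)

lemma bounded_op_bound:
  assumes "bounded_op T"
  obtains K where "K \<ge> 0" "\<And>x. norm (T x) \<le> K * norm x"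
proof -
  obtain K where K: "\<And>x. norm (T x) \<le> norm x * K" using assms by (auto simp: bounded_op_def)
  have "norm (T x) \<le> max K 0 * norm x" for x
    using K[of x] by (metis max.cobounded1 mult.commute mult_right_mono norm_ge_zero order_trans)
  then show thesis using that[of "max K 0"] by auto
qed

lemma bounded_op_intro:
  assumes "\<And>x y. T (x + y) = T x + T y" and "\<And>c x. T (scaleC c x) = scaleC c (T x)"
    and "\<And>x. norm (T x) \<le> K * norm x"
  shows "bounded_op T"
  unfolding bounded_op_def clinear_op_def using assms by (metis mult.commute)

lemma bounded_op_bounded_linear:
  assumes "bounded_op T"
  shows "bounded_linear T"
proof -
  obtain K where K: "\<And>x. norm (T x) \<le> K * norm x" using bounded_op_bound[OF assms] by blast
  show ?thesis
    by (rule bounded_linear_intro[where K=K])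
      (use assms K in \<open>auto simp: bounded_op_clinear clinear_add clinear_scaleR mult.commute\<close>)
qed

lemma bounded_op_ident: "bounded_op (\<lambda>x. x)"
  by (rule bounded_op_intro[where K=1]) auto

lemma bounded_op_comp:
  assumes S: "bounded_op S" and T: "bounded_op T"
  shows "bounded_op (S \<circ> T)"
proof -
  obtain K where K: "K \<ge> 0" "\<And>x. norm (S x) \<le> K * norm x" using bounded_op_bound[OF S] by blast
  obtain L where L: "\<And>x. norm (T x) \<le> L * norm x" using bounded_op_bound[OF T] by blast
  have "norm (S (T x)) \<le> K * L * norm x" for x
    using K(2)[of "T x"] mult_left_mono[OF L[of x] K(1)] by (simp add: mult.assoc)
  then show ?thesis
    using S T by (intro bounded_op_intro[where K="K * L"]) (auto simp: bounded_op_clinear clinear_add clinear_scaleC)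
qed

lemma bounded_op_add:
  assumes S: "bounded_op S" and T: "bounded_op T"
  shows "bounded_op (\<lambda>x. S x + T x)"
proof -
  obtain K where K: "\<And>x. norm (S x) \<le> K * norm x" using bounded_op_bound[OF S] by blast
  obtain L where L: "\<And>x. norm (T x) \<le> L * norm x" using bounded_op_bound[OF T] by blast
  have "norm (S x + T x) \<le> (K + L) * norm x" for x
    using norm_triangle_ineq[of "S x" "T x"] K[of x] L[of x] by (simp add: algebra_simps)
  then show ?thesis
    using S T by (intro bounded_op_intro[where K="K + L"])
      (auto simp: bounded_op_clinear clinear_add clinear_scaleC scaleC_add_right)
qed

lemma bounded_op_scaleC:
  assumes T: "bounded_op T"
  shows "bounded_op (\<lambda>x. scaleC c (T x))"
proof -
  obtain L where L: "L \<ge> 0" "\<And>x. norm (T x) \<le> L * norm x" using bounded_op_bound[OF T] by blast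
  have "norm (scaleC c (T x)) \<le> cmod c * L * norm x" for x
    using mult_left_mono[OF L(2)[of x], of "cmod c"] by (simp add: norm_scaleC mult.assoc)
  then show ?thesis
    using T by (intro bounded_op_intro[where K="cmod c * L"])
      (auto simp: bounded_op_clinear clinear_add clinear_scaleC scaleC_add_right scaleC_scaleC mult.commute)
qed

lemma bounded_op_scaleR: "bounded_op T \<Longrightarrow> bounded_op (\<lambda>x. t *\<^sub>R T x)"
  using bounded_op_scaleC[of T "of_real t"] by (simp add: scaleC_scaleR)

lemma bounded_op_diff: "bounded_op S \<Longrightarrow> bounded_op T \<Longrightarrow> bounded_op (\<lambda>x. S x - T x)"
  using bounded_op_add[of S "\<lambda>x. (-1) *\<^sub>R T x"] bounded_op_scaleR[of T "-1"] by simp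

section \<open>Adjoints\<close>

lemma norm_le_if_adjoint:
  fixes T S :: "'a::chilbert_space \<Rightarrow> 'a"
  assumes adjoint: "\<And>x y. cinner (T x) y = cinner x (S y)"
    and K: "K \<ge> 0" "\<And>x. norm (T x) \<le> K * norm x"
  shows "norm (S y) \<le> K * norm y"
proof -
  have "(norm (S y))\<^sup>2 = Re (cinner (T (S y)) y)" by (simp add: adjoint Re_cinner_self)
  also have "\<dots> \<le> norm (T (S y)) * norm y"
    using complex_Re_le_cmod cinner_Cauchy_Schwarz order_trans by blast
  also have "\<dots> \<le> K * norm (S y) * norm y" by (rule mult_right_mono[OF K(2)]) simp
  finally have "norm (S y) * norm (S y) \<le> (K * norm y) * norm (S y)"
    by (simp add: power2_eq_square algebra_simps)
  then show ?thesis using K(1) by (cases "S y = 0") (simp_all add: mult_le_cancel_right)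
qed

lemma adjoint_exists:
  assumes T: "bounded_op T"
  shows "\<exists>S. bounded_op S \<and> (\<forall>x y. cinner (T x) y = cinner x (S y))"
proof -
  obtain K where K: "K \<ge> 0" "\<And>x. norm (T x) \<le> K * norm x" using bounded_op_bound[OF T] by blast
  have cT: "clinear_op T" using T by (rule bounded_op_clinear)
  have "\<exists>z. \<forall>x. cinner (T x) y = cinner x z" for y
  proof -
    have "bounded_linear (\<lambda>x. cinner y (T x))"
    proof (rule bounded_linear_intro[where K="norm y * K"])
      show "norm (cinner y (T x)) \<le> norm x * (norm y * K)" for x
        using cinner_Cauchy_Schwarz[of y "T x"] mult_left_mono[OF K(2)[of x], of "norm y"]
        by (simp add: algebra_simps)
    qed (simp_all add: cT clinear_add clinear_scaleR cinner_add_right cinner_scaleR_right scaleR_conv_of_real)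
    then obtain z where "\<And>x. cinner y (T x) = cinner z x"
      using Riesz_representation[of "\<lambda>x. cinner y (T x)"]
      by (auto simp: cT clinear_scaleC cinner_scaleC_right)
    then have "cinner (T x) y = cinner x z" for x
      using cinner_commute[of "T x" y] cinner_commute[of x z] by simp
    then show ?thesis by blast
  qed
  then obtain S where S: "\<And>x y. cinner (T x) y = cinner x (S y)" by metis
  have "bounded_op S"
  proof (rule bounded_op_intro[where K=K])
    show "S (x + y) = S x + S y" for x y
      by (rule cinner_ext) (simp add: S[symmetric] cinner_add_right)
    show "S (scaleC c x) = scaleC c (S x)" for c x
      by (rule cinner_ext) (simp add: S[symmetric] cinner_scaleC_right)
    show "norm (S y) \<le> K * norm y" for y
      using S K by (rule norm_le_if_adjoint)
  qed
  then show ?thesis using S by blast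
qed

lemma
  assumes "bounded_op T"
  shows adj_bounded: "bounded_op (adj T)"
    and adj_cinner: "cinner (T x) y = cinner x (adj T y)"
  using someI_ex[OF adjoint_exists[OF assms]] unfolding adj_def by blast+

lemma adj_cinner_left: "bounded_op T \<Longrightarrow> cinner (adj T x) y = cinner x (T y)"
  by (metis adj_cinner cinner_commute)

lemma adj_unique:
  assumes "bounded_op T" "\<And>x y. cinner (T x) y = cinner x (S y)"
  shows "adj T = S"
proof
  fix y show "adj T y = S y"
    by (rule cinner_ext) (simp add: assms(2) adj_cinner[OF assms(1), symmetric])
qed

lemma adj_adj: "bounded_op T \<Longrightarrow> adj (adj T) = T"
  by (rule adj_unique) (auto simp: adj_bounded adj_cinner_left)

lemma adj_comp: "bounded_op S \<Longrightarrow> bounded_op T \<Longrightarrow> adj (S \<circ> T) = adj T \<circ> adj S"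
  by (rule adj_unique) (auto simp: bounded_op_comp adj_cinner)

lemma adj_ident: "adj (\<lambda>x. x) = (\<lambda>x::'a::chilbert_space. x)"
  by (rule adj_unique) (auto simp: bounded_op_ident)

lemma adj_add:
  "bounded_op S \<Longrightarrow> bounded_op T \<Longrightarrow> adj (\<lambda>x. S x + T x) = (\<lambda>x. adj S x + adj T x)"
  by (rule adj_unique) (auto simp: bounded_op_add adj_cinner cinner_add_left cinner_add_right)

lemma adj_scaleR: "bounded_op T \<Longrightarrow> adj (\<lambda>x. t *\<^sub>R T x) = (\<lambda>x. t *\<^sub>R adj T x)"
  by (rule adj_unique) (auto simp: bounded_op_scaleR adj_cinner cinner_scaleR_left cinner_scaleR_right)

lemma adj_diff:
  "bounded_op S \<Longrightarrow> bounded_op T \<Longrightarrow> adj (\<lambda>x. S x - T x) = (\<lambda>x. adj S x - adj T x)"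
  by (rule adj_unique) (auto simp: bounded_op_diff adj_cinner cinner_diff_left cinner_diff_right)

lemma norm_adj_le:
  assumes "bounded_op T" "K \<ge> 0" "\<And>x. norm (T x) \<le> K * norm x"
  shows "norm (adj T y) \<le> K * norm y"
  using adj_cinner[OF assms(1)] assms(2,3) by (rule norm_le_if_adjoint)

lemma selfadjoint_cinner: "selfadjoint_op D \<Longrightarrow> cinner (D x) y = cinner x (D y)"
  unfolding selfadjoint_op_def using adj_cinner by metis

lemma adj_commute:
  assumes "bounded_op S" "bounded_op T" "S \<circ> T = T \<circ> S"
  shows "adj S \<circ> adj T = adj T \<circ> adj S"
  using assms by (metis adj_comp)

lemma unitary_isometry:
  assumes "unitary_op U"
  shows "norm (U x) = norm x" and "norm (adj U x) = norm x"
proof -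
  have U: "bounded_op U" "\<And>x. adj U (U x) = x" "\<And>x. U (adj U x) = x"
    using assms by (auto simp: unitary_op_def fun_eq_iff)
  show "norm (U x) = norm x"
    by (rule norm_eq_if_cinner_self_eq) (simp add: adj_cinner[OF U(1)] U(2))
  show "norm (adj U x) = norm x"
    by (rule norm_eq_if_cinner_self_eq) (simp add: adj_cinner_left[OF U(1)] U(3))
qed

section \<open>Invertibility and spectrum\<close>

lemma op_invertible_bounded: "op_invertible T \<Longrightarrow> bounded_op T"
  by (simp add: op_invertible_def)

lemma op_invertible_intro:
  "bounded_op T \<Longrightarrow> bounded_op S \<Longrightarrow> S \<circ> T = id \<Longrightarrow> T \<circ> S = id \<Longrightarrow> op_invertible T"
  unfolding op_invertible_def by blast

lemma inv_eq_if_inverse: "S \<circ> T = id \<Longrightarrow> T \<circ> S = id \<Longrightarrow> inv T = S"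
  by (rule inv_unique_comp)

lemma
  assumes "op_invertible T"
  shows op_invertible_inv_bounded: "bounded_op (inv T)"
    and inv_op_apply [simp]: "inv T (T x) = x"
    and op_inv_apply [simp]: "T (inv T x) = x"
proof -
  obtain S where S: "bounded_op S" "S \<circ> T = id" "T \<circ> S = id"
    using assms by (auto simp: op_invertible_def)
  moreover from S have "inv T = S" by (simp add: inv_eq_if_inverse)
  ultimately show "bounded_op (inv T)" "inv T (T x) = x" "T (inv T x) = x"
    by (simp_all add: pointfree_idE)
qed

lemma op_invertible_inv: "op_invertible T \<Longrightarrow> op_invertible (inv T)"
  by (rule op_invertible_intro[where S=T])
    (auto simp: op_invertible_inv_bounded op_invertible_bounded fun_eq_iff)

lemma op_invertible_comp:
  assumes "op_invertible P" "op_invertible Q"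
  shows "op_invertible (P \<circ> Q)"
  using assms
  by (intro op_invertible_intro[where S="inv Q \<circ> inv P"])
    (auto simp: bounded_op_comp op_invertible_bounded op_invertible_inv_bounded fun_eq_iff)

lemma op_invertible_scaleC:
  assumes P: "op_invertible P" and "c \<noteq> 0"
  shows "op_invertible (\<lambda>x. scaleC c (P x))"
proof (rule op_invertible_intro[where S="\<lambda>x. inv P (scaleC (1 / c) x)"])
  have "clinear_op (inv P)" "clinear_op P"
    using P by (simp_all add: op_invertible_inv_bounded op_invertible_bounded bounded_op_clinear)
  then show "(\<lambda>x. inv P (scaleC (1 / c) x)) \<circ> (\<lambda>x. scaleC c (P x)) = id"
    and "(\<lambda>x. scaleC c (P x)) \<circ> (\<lambda>x. inv P (scaleC (1 / c) x)) = id"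
    using P \<open>c \<noteq> 0\<close> by (auto simp: fun_eq_iff clinear_scaleC scaleC_scaleC scaleC_one)
  show "bounded_op (\<lambda>x. scaleC c (P x))"
    using P by (simp add: bounded_op_scaleC op_invertible_bounded)
  show "bounded_op (\<lambda>x. inv P (scaleC (1 / c) x))"
    using bounded_op_comp[OF op_invertible_inv_bounded[OF P] bounded_op_scaleC[OF bounded_op_ident]]
    by (simp add: comp_def)
qed

lemma op_invertible_bounded_below:
  assumes "op_invertible P"
  obtains C where "C > 0" "\<And>x. norm x \<le> C * norm (P x)"
proof -
  obtain K where K: "K \<ge> 0" "\<And>x. norm (inv P x) \<le> K * norm x"
    using bounded_op_bound[OF op_invertible_inv_bounded[OF assms]] by blast
  have "norm x \<le> (K + 1) * norm (P x)" for x
    using K(2)[of "P x"] assms by (simp add: mult_right_mono order_trans)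
  then show thesis using that[of "K + 1"] K(1) by simp
qed

text \<open>Neumann series, via the Banach fixed point theorem: \<open>x - K x = y\<close> has the unique
  solution \<open>x\<close> fixed by the contraction \<open>x \<mapsto> y + K x\<close>.\<close>

lemma op_invertible_ident_minus:
  fixes K :: "'a::chilbert_space \<Rightarrow> 'a"
  assumes K: "bounded_op K" "\<And>x. norm (K x) \<le> k * norm x" and k: "0 \<le> k" "k < 1"
  shows "op_invertible (\<lambda>x. x - K x)"
proof -
  have cK: "clinear_op K" using K(1) by (rule bounded_op_clinear)
  have ex: "\<exists>!x. y + K x = x" for y
    by (rule banach_fix_type[OF k]) (use K(2) cK in \<open>simp add: dist_norm clinear_diff[symmetric]\<close>)
  define S where "S y = (THE x. y + K x = x)" for y
  have S: "y + K (S y) = S y" for y unfolding S_def by (rule theI'[OF ex])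
  have S_eq: "y + K x = x \<Longrightarrow> S y = x" for x y using ex S by metis
  show ?thesis
  proof (rule op_invertible_intro[where S=S])
    show "bounded_op (\<lambda>x. x - K x)" using K(1) by (simp add: bounded_op_diff bounded_op_ident)
    show "bounded_op S"
    proof (rule bounded_op_intro[where K="1 / (1 - k)"])
      show "S (x + y) = S x + S y" for x y
        by (rule S_eq) (metis (no_types, lifting) S add.assoc add.left_commute cK clinear_add)
      show "S (scaleC c x) = scaleC c (S x)" for c x
        by (rule S_eq) (metis S cK clinear_scaleC scaleC_add_right)
      show "norm (S y) \<le> 1 / (1 - k) * norm y" for y
      proof -
        have "norm (S y) \<le> norm y + k * norm (S y)"
          by (metis S K(2) norm_triangle_ineq add_left_mono order_trans)
        then show ?thesis using k by (simp add: field_simps)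
      qed
    qed
    show "S \<circ> (\<lambda>x. x - K x) = id" by (rule ext) (simp add: S_eq)
    show "(\<lambda>x. x - K x) \<circ> S = id" by (rule ext) (metis S add_diff_cancel_right' comp_apply id_apply)
  qed
qed

lemma op_spectrum_norm_le:
  assumes D: "bounded_op D" "\<And>x. norm (D x) \<le> R * norm x" and "R \<ge> 0"
    and c: "c \<in> op_spectrum D"
  shows "cmod c \<le> R"
proof (rule ccontr)
  assume "\<not> cmod c \<le> R"
  then have c_gt: "cmod c > R" and "c \<noteq> 0" using \<open>R \<ge> 0\<close> by auto
  have "norm (scaleC (1 / c) (D x)) \<le> (R / cmod c) * norm x" for x
    using D(2)[of x] \<open>c \<noteq> 0\<close> by (simp add: norm_scaleC norm_divide field_simps)
  then have "op_invertible (\<lambda>x. x - scaleC (1 / c) (D x))"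
    using \<open>R \<ge> 0\<close> c_gt
    by (intro op_invertible_ident_minus[where k="R / cmod c"] bounded_op_scaleC D(1))
      (auto simp: divide_less_eq)
  then have "op_invertible (\<lambda>x. scaleC (-c) (x - scaleC (1 / c) (D x)))"
    using \<open>c \<noteq> 0\<close> by (intro op_invertible_scaleC) auto
  also have "(\<lambda>x. scaleC (-c) (x - scaleC (1 / c) (D x))) = (\<lambda>x. D x - scaleC c x)"
    using \<open>c \<noteq> 0\<close>
    by (auto simp: fun_eq_iff scaleC_diff_right scaleC_scaleC scaleC_minus_left scaleC_one)
  finally show False using c by (simp add: op_spectrum_def)
qed

lemma op_spectrum_inv:
  assumes D: "op_invertible D" and "c \<noteq> 0" and c: "c \<in> op_spectrum (inv D)"
  shows "1 / c \<in> op_spectrum D"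
proof (rule ccontr)
  assume "1 / c \<notin> op_spectrum D"
  then have "op_invertible (\<lambda>x. D x - scaleC (1 / c) x)" by (simp add: op_spectrum_def)
  then have "op_invertible (\<lambda>x. scaleC (-c) ((inv D \<circ> (\<lambda>x. D x - scaleC (1 / c) x)) x))"
    using D \<open>c \<noteq> 0\<close> by (intro op_invertible_scaleC op_invertible_comp op_invertible_inv) auto
  also have "(\<lambda>x. scaleC (-c) ((inv D \<circ> (\<lambda>x. D x - scaleC (1 / c) x)) x)) = (\<lambda>x. inv D x - scaleC c x)"
    using D \<open>c \<noteq> 0\<close> bounded_op_clinear[OF op_invertible_inv_bounded[OF D]]
    by (auto simp: fun_eq_iff clinear_diff clinear_scaleC scaleC_diff_right scaleC_scaleC
        scaleC_minus_left scaleC_one)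
  finally show False using c by (simp add: op_spectrum_def)
qed

lemma selfadjoint_inv:
  assumes D: "selfadjoint_op D" "op_invertible D"
  shows "selfadjoint_op (inv D)"
proof -
  have "cinner (inv D x) y = cinner x (inv D y)" for x y
    using selfadjoint_cinner[OF D(1), of "inv D x" "inv D y"] D(2) by simp
  then show ?thesis
    using D(2) by (simp add: selfadjoint_op_def adj_unique op_invertible_inv_bounded)
qed

lemma inv_inv_op: "op_invertible D \<Longrightarrow> inv (inv D) = D"
  by (rule inv_eq_if_inverse) (auto simp: fun_eq_iff)

lemma selfadjoint_norm_square_shift:
  assumes D: "selfadjoint_op D" "\<And>y. norm (D y) \<le> M * norm y"
  shows "(norm (D (D y) - (M * M) *\<^sub>R y))\<^sup>2 \<le> M\<^sup>2 * (M\<^sup>2 * (norm y)\<^sup>2 - (norm (D y))\<^sup>2)"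
proof -
  have "(norm (D (D y)))\<^sup>2 \<le> M\<^sup>2 * (norm (D y))\<^sup>2"
    using D(2)[of "D y"] by (metis norm_ge_zero power_mono power_mult_distrib)
  moreover have "Re (cinner (D (D y)) ((M * M) *\<^sub>R y)) = M\<^sup>2 * (norm (D y))\<^sup>2"
    by (simp add: cinner_scaleR_right selfadjoint_cinner[OF D(1)] cinner_self_norm power2_eq_square)
  moreover have "(norm ((M * M) *\<^sub>R y))\<^sup>2 = M\<^sup>2 * M\<^sup>2 * (norm y)\<^sup>2"
    by (simp add: power2_eq_square)
  ultimately show ?thesis
    unfolding power2_norm_diff by (simp add: algebra_simps)
qed

lemma selfadjoint_norm_decreases_if_shift_bounded_below:
  assumes D: "selfadjoint_op D" "\<And>y. norm (D y) \<le> M * norm y" and "M > 0"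
    and C: "C > 0" "\<And>y. norm y \<le> C * norm (D (D y) - (M * M) *\<^sub>R y)"
  obtains M' where "0 \<le> M'" "M' < M" "\<And>y. norm (D y) \<le> M' * norm y"
proof -
  define \<delta> where "\<delta> = 1 / (C\<^sup>2 * M\<^sup>2)"
  have "(norm (D y))\<^sup>2 \<le> (M\<^sup>2 - \<delta>) * (norm y)\<^sup>2" for y
  proof -
    have "(norm y)\<^sup>2 \<le> C\<^sup>2 * (norm (D (D y) - (M * M) *\<^sub>R y))\<^sup>2"
      using C(2)[of y] by (metis norm_ge_zero power_mono power_mult_distrib)
    also have "\<dots> \<le> C\<^sup>2 * (M\<^sup>2 * (M\<^sup>2 * (norm y)\<^sup>2 - (norm (D y))\<^sup>2))"
      using selfadjoint_norm_square_shift[OF D] by (simp add: mult_left_mono)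
    finally show ?thesis using C \<open>M > 0\<close> by (simp add: \<delta>_def field_simps)
  qed
  then have "(norm (D y))\<^sup>2 \<le> (sqrt (max 0 (M\<^sup>2 - \<delta>)) * norm y)\<^sup>2" for y
    by (simp add: power_mult_distrib) (smt (verit) mult_right_mono zero_le_power2)
  then have "norm (D y) \<le> sqrt (max 0 (M\<^sup>2 - \<delta>)) * norm y" for y
    by (rule power2_le_imp_le) simp
  moreover have "sqrt (max 0 (M\<^sup>2 - \<delta>)) < M"
    using C \<open>M > 0\<close> by (simp add: \<delta>_def real_sqrt_less_iff real_less_lsqrt)
  ultimately show thesis by (intro that) auto
qed

text \<open>The norm \<open>M\<close> of a self-adjoint operator is its spectral radius: otherwise
  \<open>D\<^sup>2 - M\<^sup>2 = (D - M) (D + M)\<close> is invertible, hence bounded below.\<close>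

lemma selfadjoint_norm_le_spectrum_bound:
  assumes D: "selfadjoint_op D" and "R \<ge> 0"
    and spectrum: "\<And>c. c \<in> op_spectrum D \<Longrightarrow> cmod c \<le> R"
  shows "norm (D x) \<le> R * norm x"
proof -
  have bD: "bounded_op D" using D by (simp add: selfadjoint_op_def)
  have blD: "bounded_linear D" using bD by (rule bounded_op_bounded_linear)
  define M where "M = onorm D"
  have DM: "norm (D y) \<le> M * norm y" for y unfolding M_def by (rule onorm[OF blD])
  show ?thesis
  proof (cases "M \<le> R")
    case True
    then show ?thesis using DM[of x] by (meson mult_right_mono norm_ge_zero order_trans)
  next
    case False
    then have "M > R" "M > 0" using \<open>R \<ge> 0\<close> by auto
    have "op_invertible (\<lambda>x. D x - scaleC (of_real c) x)" if "c = M \<or> c = -M" for c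
    proof -
      have "of_real c \<notin> op_spectrum D"
        using spectrum[of "of_real c"] that \<open>M > R\<close> \<open>M > 0\<close> by force
      then show ?thesis by (simp add: op_spectrum_def)
    qed
    from this[of M] this[of "-M"]
    have "op_invertible ((\<lambda>x. D x - M *\<^sub>R x) \<circ> (\<lambda>x. D x + M *\<^sub>R x))"
      by (intro op_invertible_comp) (simp_all add: scaleC_scaleR scaleC_minus_left)
    also have "(\<lambda>x. D x - M *\<^sub>R x) \<circ> (\<lambda>x. D x + M *\<^sub>R x) = (\<lambda>y. D (D y) - (M * M) *\<^sub>R y)"
      using bounded_op_clinear[OF bD] by (auto simp: fun_eq_iff clinear_add clinear_scaleR algebra_simps)
    finally obtain C where "C > 0" "\<And>y. norm y \<le> C * norm (D (D y) - (M * M) *\<^sub>R y)"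
      by (rule op_invertible_bounded_below) blast
    then obtain M' where "0 \<le> M'" "M' < M" "\<And>y. norm (D y) \<le> M' * norm y"
      by (rule selfadjoint_norm_decreases_if_shift_bounded_below[OF D DM \<open>M > 0\<close>]) blast
    then have "M \<le> M'" unfolding M_def by (intro onorm_bound)
    with \<open>M' < M\<close> show ?thesis by simp
  qed
qed

lemma closure_annulus:
  assumes r: "0 < r" "r < 1"
  shows "closure (annulus r) = {z. r \<le> cmod z \<and> cmod z \<le> 1 / r}"
proof
  have "closed {z. r \<le> cmod z \<and> cmod z \<le> 1 / r}"
    by (simp add: Collect_conj_eq closed_Collect_le closed_Int continuous_on_norm_id continuous_on_const)
  then show "closure (annulus r) \<subseteq> {z. r \<le> cmod z \<and> cmod z \<le> 1 / r}"
    by (rule closure_minimal[rotated]) (auto simp: annulus_def)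
  show "{z. r \<le> cmod z \<and> cmod z \<le> 1 / r} \<subseteq> closure (annulus r)"
  proof
    fix z assume z: "z \<in> {z. r \<le> cmod z \<and> cmod z \<le> 1 / r}"
    then have "cmod z > 0" using r by auto
    \<comment> \<open>the real ray through \<open>z\<close> meets the open annulus in an interval whose closure contains \<open>1\<close>\<close>
    define I where "I = {r / cmod z <..< 1 / (r * cmod z)}"
    have "r < 1 / r" using r by (simp add: field_simps power2_eq_square[symmetric] power_less_one_iff)
    then have "closure I = {r / cmod z .. 1 / (r * cmod z)}"
      unfolding I_def using \<open>cmod z > 0\<close> r by (intro closure_greaterThanLessThan) (simp add: field_simps)
    then have "1 \<in> closure I" using z r \<open>cmod z > 0\<close> by (auto simp: field_simps)
    moreover have "(\<lambda>t. of_real t * z) ` I \<subseteq> annulus r"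
    proof (clarsimp simp: I_def annulus_def norm_mult)
      fix t assume t: "r / cmod z < t" "t < 1 / (r * cmod z)"
      then have "t > 0" using r \<open>cmod z > 0\<close> by (smt (verit) divide_pos_pos)
      then show "r < \<bar>t\<bar> * cmod z \<and> \<bar>t\<bar> * cmod z < 1 / r"
        using t r \<open>cmod z > 0\<close> by (simp add: field_simps)
    qed
    then have "(\<lambda>t. of_real t * z) ` closure I \<subseteq> closure (annulus r)"
      by (intro image_closure_subset continuous_intros) (auto intro: closure_subset[THEN subsetD])
    ultimately show "z \<in> closure (annulus r)" by force
  qed
qed

lemma op_invertible_if_spectrum_annulus:
  assumes "0 < r" "r < 1" "op_spectrum D \<subseteq> closure (annulus r)"
  shows "op_invertible D"
proof -
  have "0 \<notin> op_spectrum D" using assms closure_annulus[of r] by auto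
  then show ?thesis by (simp add: op_spectrum_def)
qed

lemma op_spectrum_subset_closure_annulus:
  assumes D: "op_invertible D" and r: "0 < r" "r < 1"
    and norm_D: "\<And>x. r * norm (D x) \<le> norm x" and norm_inv: "\<And>x. r * norm (inv D x) \<le> norm x"
  shows "op_spectrum D \<subseteq> closure (annulus r)"
proof
  fix c assume c: "c \<in> op_spectrum D"
  have "c \<noteq> 0" using c D by (auto simp: op_spectrum_def)
  have "cmod c \<le> 1 / r"
    by (rule op_spectrum_norm_le[OF op_invertible_bounded[OF D] _ _ c])
      (use norm_D r in \<open>auto simp: field_simps\<close>)
  moreover have "cmod (1 / c) \<le> 1 / r"
  proof (rule op_spectrum_norm_le[OF op_invertible_inv_bounded[OF D]])
    show "1 / c \<in> op_spectrum (inv D)"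
      using op_spectrum_inv[of "inv D" c] D c \<open>c \<noteq> 0\<close> by (simp add: op_invertible_inv inv_inv_op)
  qed (use norm_inv r in \<open>auto simp: field_simps\<close>)
  ultimately show "c \<in> closure (annulus r)"
    using closure_annulus[OF r] r \<open>c \<noteq> 0\<close> by (auto simp: norm_divide field_simps)
qed

lemma selfadjoint_norm_bounds_if_spectrum_annulus:
  assumes D: "selfadjoint_op D" and r: "0 < r" "r < 1"
    and spectrum: "op_spectrum D \<subseteq> closure (annulus r)"
  shows "r * norm (D x) \<le> norm x" and "r * norm (inv D x) \<le> norm x"
proof -
  have iD: "op_invertible D" using r spectrum by (rule op_invertible_if_spectrum_annulus)
  have spectrum_le: "r \<le> cmod c \<and> cmod c \<le> 1 / r" if "c \<in> op_spectrum D" for c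
    using that spectrum closure_annulus[OF r] by auto
  have "norm (D x) \<le> 1 / r * norm x"
    using D r spectrum_le by (intro selfadjoint_norm_le_spectrum_bound) auto
  then show "r * norm (D x) \<le> norm x" using r by (simp add: field_simps)
  have "cmod c \<le> 1 / r" if c: "c \<in> op_spectrum (inv D)" for c
  proof -
    have "c \<noteq> 0" using c op_invertible_inv[OF iD] by (auto simp: op_spectrum_def)
    then have "r \<le> cmod (1 / c)" using spectrum_le op_spectrum_inv[OF iD _ c] by blast
    then show ?thesis using r \<open>c \<noteq> 0\<close> by (simp add: norm_divide field_simps)
  qed
  then have "norm (inv D x) \<le> 1 / r * norm x"
    using r by (intro selfadjoint_norm_le_spectrum_bound selfadjoint_inv D iD) auto
  then show "r * norm (inv D x) \<le> norm x" using r by (simp add: field_simps)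
qed

lemma onorm_le_one_iff: "bounded_linear f \<Longrightarrow> onorm f \<le> 1 \<longleftrightarrow> (\<forall>x. norm (f x) \<le> norm x)"
  by (metis mult_1 mult_right_mono norm_ge_zero onorm onorm_bound order_trans zero_le_one)

lemma QA_iff_norm_bounds:
  assumes T: "op_invertible T" and "r > 0"
  shows "T \<in> QA r \<longleftrightarrow> (\<forall>x. r * norm (T x) \<le> norm x) \<and> (\<forall>x. r * norm (inv T x) \<le> norm x)"
proof -
  have "onorm (\<lambda>x. r *\<^sub>R S x) \<le> 1 \<longleftrightarrow> (\<forall>x. r * norm (S x) \<le> norm x)" if "bounded_op S" for S
    using onorm_le_one_iff[OF bounded_op_bounded_linear[OF bounded_op_scaleR[OF that]]] \<open>r > 0\<close>
    by simp
  from this[OF op_invertible_bounded[OF T]] this[OF op_invertible_inv_bounded[OF T]]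
  show ?thesis using T by (simp add: QA_def)
qed

section \<open>Square roots of strictly positive operators\<close>

lemma comp_commute_apply: "f \<circ> g = g \<circ> f \<Longrightarrow> f (g x) = g (f x)"
  by (metis comp_apply)

definition bicommutant :: "('a::chilbert_space \<Rightarrow> 'a) \<Rightarrow> ('a \<Rightarrow> 'a) set" where
  "bicommutant A = {Y. \<forall>X. bounded_op X \<longrightarrow> X \<circ> A = A \<circ> X \<longrightarrow> X \<circ> Y = Y \<circ> X}"

lemma bicommutantD: "Y \<in> bicommutant A \<Longrightarrow> bounded_op X \<Longrightarrow> X \<circ> A = A \<circ> X \<Longrightarrow> X \<circ> Y = Y \<circ> X"
  by (simp add: bicommutant_def)

lemma bicommutant_commute:
  assumes "bounded_op A" "Y \<in> bicommutant A" "Z \<in> bicommutant A" "bounded_op Z"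
  shows "Y \<circ> Z = Z \<circ> Y"
proof -
  have "A \<circ> Z = Z \<circ> A" by (rule bicommutantD[OF assms(3,1) refl])
  then show ?thesis using bicommutantD[OF assms(2,4)] by simp
qed

lemma adj_mem_bicommutant:
  assumes A: "selfadjoint_op A" and Y: "Y \<in> bicommutant A" "bounded_op Y"
  shows "adj Y \<in> bicommutant A"
  unfolding bicommutant_def
proof (intro CollectI allI impI)
  fix X assume X: "bounded_op X" "X \<circ> A = A \<circ> X"
  have bA: "bounded_op A" "adj A = A" using A by (auto simp: selfadjoint_op_def)
  have "adj X \<circ> A = A \<circ> adj X" using adj_commute[OF X(1) bA(1) X(2)] bA(2) by simp
  then have "adj X \<circ> Y = Y \<circ> adj X" by (rule bicommutantD[OF Y(1) adj_bounded[OF X(1)]])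
  then show "X \<circ> adj Y = adj Y \<circ> X"
    using adj_commute[OF adj_bounded[OF X(1)] Y(2)] X(1) by (simp add: adj_adj)
qed

lemma positive_selfadjoint_norm_le:
  assumes B: "selfadjoint_op B" and pos: "\<And>x. 0 \<le> Re (cinner (B x) x)"
    and upper: "\<And>x. Re (cinner (B x) x) \<le> \<beta> * (norm x)\<^sup>2" and "0 \<le> \<beta>"
  shows "norm (B x) \<le> \<beta> * norm x"
proof -
  have cB: "clinear_op B" using B by (simp add: selfadjoint_op_def bounded_op_clinear)
  \<comment> \<open>Cauchy--Schwarz for the positive form \<open>\<langle>B u, v\<rangle>\<close>, applied to \<open>x\<close> and \<open>B x\<close>\<close>
  have "(norm (B x))\<^sup>2 * (norm (B x))\<^sup>2 = (cmod (cinner (B x) (B x)))\<^sup>2"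
    by (simp add: cinner_self_norm norm_mult power2_eq_square)
  also have "\<dots> \<le> Re (cinner (B x) x) * Re (cinner (B (B x)) (B x))"
  proof (rule sesquilinear_Cauchy_Schwarz[where q="\<lambda>u v. cinner (B u) v"])
    show "cinner (B u) v = cnj (cinner (B v) u)" for u v
      by (metis selfadjoint_cinner[OF B] cinner_commute)
    show "cinner (B (u + v)) w = cinner (B u) w + cinner (B v) w" for u v w
      using cB by (simp add: clinear_add cinner_add_left)
    show "cinner (B (scaleC a u)) v = cnj a * cinner (B u) v" for a u v
      using cB by (simp add: clinear_scaleC cinner_scaleC_left)
  qed (rule pos)
  also have "\<dots> \<le> (\<beta> * (norm x)\<^sup>2) * (\<beta> * (norm (B x))\<^sup>2)"
    by (rule mult_mono[OF upper upper _ pos]) (simp add: \<open>0 \<le> \<beta>\<close>)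
  also have "\<dots> = (\<beta> * norm x)\<^sup>2 * (norm (B x))\<^sup>2"
    by (simp add: power2_eq_square)
  finally have le: "(norm (B x))\<^sup>2 * (norm (B x))\<^sup>2 \<le> (\<beta> * norm x)\<^sup>2 * (norm (B x))\<^sup>2" .
  have "(norm (B x))\<^sup>2 \<le> (\<beta> * norm x)\<^sup>2"
  proof (cases "B x = 0")
    case False
    then have "(norm (B x))\<^sup>2 > 0" by simp
    with le show ?thesis by (rule mult_right_le_imp_le)
  qed simp
  then show ?thesis by (rule power2_le_imp_le) (simp add: \<open>0 \<le> \<beta>\<close>)
qed

text \<open>For \<open>\<parallel>B\<parallel> \<le> \<beta> < 1\<close>, the operator \<open>(I - B)\<^sup>1\<^sup>/\<^sup>2 = I - Y\<close> is found as the fixed point \<open>Y\<close>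
  of \<open>Y \<mapsto> (B + Y\<^sup>2) / 2\<close>, a contraction on the operators of norm at most
  \<open>\<rho> = 1 - (1 - \<beta>)\<^sup>1\<^sup>/\<^sup>2\<close> in the bicommutant of \<open>B\<close> (which commute with each other).\<close>

definition sqrt_step :: "('a::chilbert_space \<Rightarrow> 'a) \<Rightarrow> ('a \<Rightarrow>\<^sub>L 'a) \<Rightarrow> ('a \<Rightarrow>\<^sub>L 'a)" where
  "sqrt_step B Y = Blinfun (\<lambda>x. (1/2) *\<^sub>R (B x + Y (Y x)))"

definition sqrt_domain :: "('a::chilbert_space \<Rightarrow> 'a) \<Rightarrow> real \<Rightarrow> ('a \<Rightarrow>\<^sub>L 'a) set" where
  "sqrt_domain B \<rho> = {Y. norm Y \<le> \<rho> \<and> clinear_op (blinfun_apply Y) \<and> blinfun_apply Y \<in> bicommutant B}"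

lemma bounded_op_blinfun_apply: "clinear_op (blinfun_apply Y) \<Longrightarrow> bounded_op (blinfun_apply Y)"
  by (rule bounded_op_intro[where K="norm Y"]) (auto simp: clinear_op_def blinfun.add_right norm_blinfun)

lemma Blinfun_bounded_op: "bounded_op f \<Longrightarrow> blinfun_apply (Blinfun f) = f"
  by (rule bounded_linear_Blinfun_apply[OF bounded_op_bounded_linear])

lemma sqrt_step_apply:
  assumes "bounded_op B" "clinear_op (blinfun_apply Y)"
  shows "blinfun_apply (sqrt_step B Y) = (\<lambda>x. (1/2) *\<^sub>R (B x + Y (Y x)))"
    and "bounded_op (blinfun_apply (sqrt_step B Y))"
proof -
  have "bounded_op (\<lambda>x. (1/2) *\<^sub>R (B x + (blinfun_apply Y \<circ> blinfun_apply Y) x))"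
    using assms by (intro bounded_op_scaleR bounded_op_add bounded_op_comp bounded_op_blinfun_apply)
  then show "blinfun_apply (sqrt_step B Y) = (\<lambda>x. (1/2) *\<^sub>R (B x + Y (Y x)))"
    and "bounded_op (blinfun_apply (sqrt_step B Y))"
    unfolding sqrt_step_def by (simp_all add: Blinfun_bounded_op)
qed

lemma closed_sqrt_domain: "closed (sqrt_domain B \<rho>)"
proof (rule closed_sequential_limits[THEN iffD2], intro allI impI, elim conjE)
  fix Ys :: "nat \<Rightarrow> 'a \<Rightarrow>\<^sub>L 'a" and Y
  assume mem: "\<forall>n. Ys n \<in> sqrt_domain B \<rho>" and lim: "Ys \<longlonglongrightarrow> Y"
  have pointwise: "(\<lambda>n. Ys n v) \<longlonglongrightarrow> Y v" for v by (rule blinfun.tendsto[OF lim tendsto_const])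
  have commute_limit: "X (Y v) = Y (X v)"
    if X: "bounded_linear X" "\<And>n v. X (Ys n v) = Ys n (X v)" for X v
  proof (rule LIMSEQ_unique)
    show "(\<lambda>n. X (Ys n v)) \<longlonglongrightarrow> X (Y v)" by (rule bounded_linear.tendsto[OF X(1) pointwise])
    show "(\<lambda>n. X (Ys n v)) \<longlonglongrightarrow> Y (X v)" unfolding X(2) by (rule pointwise)
  qed
  have "norm Y \<le> \<rho>"
    by (rule LIMSEQ_le_const2[OF tendsto_norm[OF lim]]) (use mem in \<open>auto simp: sqrt_domain_def\<close>)
  moreover have "clinear_op (blinfun_apply Y)"
    unfolding clinear_op_def
  proof (intro conjI allI)
    show "Y (x + y) = Y x + Y y" for x y by (simp add: blinfun.add_right)
    show "Y (scaleC c x) = scaleC c (Y x)" for c x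
      using mem by (intro commute_limit[of "scaleC c", symmetric] bounded_op_bounded_linear
          bounded_op_scaleC[OF bounded_op_ident, simplified]) (auto simp: sqrt_domain_def clinear_scaleC)
  qed
  moreover have "blinfun_apply Y \<in> bicommutant B"
    unfolding bicommutant_def
  proof (intro CollectI allI impI ext)
    fix X v assume X: "bounded_op X" "X \<circ> B = B \<circ> X"
    have "X (Ys n w) = Ys n (X w)" for n w
    proof -
      have "blinfun_apply (Ys n) \<in> bicommutant B" using mem by (simp add: sqrt_domain_def)
      from bicommutantD[OF this X] show ?thesis by (simp add: fun_eq_iff)
    qed
    then show "(X \<circ> blinfun_apply Y) v = (blinfun_apply Y \<circ> X) v"
      using commute_limit bounded_op_bounded_linear[OF X(1)] by simp
  qed
  ultimately show "Y \<in> sqrt_domain B \<rho>" by (simp add: sqrt_domain_def)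
qed

lemma zero_in_sqrt_domain: "0 \<le> \<rho> \<Longrightarrow> 0 \<in> sqrt_domain B \<rho>"
  by (auto simp: sqrt_domain_def bicommutant_def clinear_op_def fun_eq_iff
      intro: clinear_zero bounded_op_clinear)

lemma sqrt_step_mem:
  assumes B: "bounded_op B" "\<And>x. norm (B x) \<le> \<beta> * norm x" "0 \<le> \<beta>"
    and \<rho>: "\<beta> + \<rho>\<^sup>2 \<le> 2 * \<rho>" and Y: "Y \<in> sqrt_domain B \<rho>"
  shows "sqrt_step B Y \<in> sqrt_domain B \<rho>"
proof -
  have cY: "clinear_op (blinfun_apply Y)" and nY: "norm Y \<le> \<rho>" and bY: "blinfun_apply Y \<in> bicommutant B"
    using Y by (auto simp: sqrt_domain_def)
  have step: "blinfun_apply (sqrt_step B Y) = (\<lambda>x. (1/2) *\<^sub>R (B x + Y (Y x)))"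
    using B(1) cY by (rule sqrt_step_apply(1))
  have "norm (Y (Y x)) \<le> \<rho>\<^sup>2 * norm x" for x
  proof -
    have "norm (Y (Y x)) \<le> norm Y * (norm Y * norm x)"
      by (meson mult_left_mono norm_blinfun norm_ge_zero order_trans)
    also have "\<dots> \<le> \<rho> * (\<rho> * norm x)"
      using nY order_trans[OF norm_ge_zero nY] by (intro mult_mono mult_right_mono) auto
    finally show ?thesis by (simp add: power2_eq_square)
  qed
  then have "norm ((1/2) *\<^sub>R (B x + Y (Y x))) \<le> \<rho> * norm x" for x
  proof -
    have "norm ((1/2) *\<^sub>R (B x + Y (Y x))) \<le> (1/2) * (\<beta> * norm x + \<rho>\<^sup>2 * norm x)"
      using B(2)[of x] norm_triangle_ineq[of "B x" "Y (Y x)"] \<open>norm (Y (Y x)) \<le> \<rho>\<^sup>2 * norm x\<close>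
      by simp
    also have "\<dots> \<le> \<rho> * norm x"
      using mult_right_mono[OF \<rho>, of "norm x"] by (simp add: algebra_simps)
    finally show ?thesis .
  qed
  then have "norm (sqrt_step B Y) \<le> \<rho>"
    using order_trans[OF norm_ge_zero nY] by (intro norm_blinfun_bound) (auto simp: step)
  moreover have "clinear_op (blinfun_apply (sqrt_step B Y))"
    using sqrt_step_apply(2)[OF B(1) cY] by (rule bounded_op_clinear)
  moreover have "blinfun_apply (sqrt_step B Y) \<in> bicommutant B"
    unfolding bicommutant_def
  proof (intro CollectI allI impI ext)
    fix X v assume X: "bounded_op X" "X \<circ> B = B \<circ> X"
    have "X (Y w) = Y (X w)" "X (B w) = B (X w)" for w
      using bicommutantD[OF bY X] X(2) by (auto simp: fun_eq_iff)
    then show "(X \<circ> blinfun_apply (sqrt_step B Y)) v = (blinfun_apply (sqrt_step B Y) \<circ> X) v"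
      using bounded_op_clinear[OF X(1)] by (simp add: step clinear_scaleR clinear_add)
  qed
  ultimately show ?thesis by (simp add: sqrt_domain_def)
qed

lemma sqrt_step_contraction:
  assumes B: "bounded_op B" and Y: "Y \<in> sqrt_domain B \<rho>" and Z: "Z \<in> sqrt_domain B \<rho>"
  shows "dist (sqrt_step B Y) (sqrt_step B Z) \<le> \<rho> * dist Y Z"
proof -
  have cY: "clinear_op (blinfun_apply Y)" and cZ: "clinear_op (blinfun_apply Z)"
    and nY: "norm Y \<le> \<rho>" and nZ: "norm Z \<le> \<rho>" using Y Z by (auto simp: sqrt_domain_def)
  have "blinfun_apply Y \<circ> blinfun_apply Z = blinfun_apply Z \<circ> blinfun_apply Y"
    by (rule bicommutant_commute[OF B]) (use Y Z cZ in \<open>auto simp: sqrt_domain_def bounded_op_blinfun_apply\<close>)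
  then have YZ: "Y (Z x) = Z (Y x)" for x by (rule comp_commute_apply)
  have "norm (blinfun_apply (sqrt_step B Y - sqrt_step B Z) x) \<le> \<rho> * norm (Y - Z) * norm x" for x
  proof -
    have "blinfun_apply (sqrt_step B Y - sqrt_step B Z) x = (1/2) *\<^sub>R (Y ((Y - Z) x) + Z ((Y - Z) x))"
      using YZ[of x] by (simp add: minus_blinfun.rep_eq sqrt_step_apply(1)[OF B cY]
          sqrt_step_apply(1)[OF B cZ] blinfun.diff_left blinfun.diff_right algebra_simps)
    then have "norm (blinfun_apply (sqrt_step B Y - sqrt_step B Z) x)
        = (1/2) * norm (Y ((Y - Z) x) + Z ((Y - Z) x))" by simp
    also have "\<dots> \<le> (1/2) * (norm Y * norm ((Y - Z) x) + norm Z * norm ((Y - Z) x))"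
      by (intro mult_left_mono order_trans[OF norm_triangle_ineq] add_mono norm_blinfun) auto
    also have "\<dots> \<le> \<rho> * norm ((Y - Z) x)"
      using mult_right_mono[OF nY norm_ge_zero[of "(Y - Z) x"]]
        mult_right_mono[OF nZ norm_ge_zero[of "(Y - Z) x"]]
      by (simp add: field_simps)
    also have "\<dots> \<le> \<rho> * (norm (Y - Z) * norm x)"
      using order_trans[OF norm_ge_zero nY] by (intro mult_left_mono norm_blinfun)
    finally show ?thesis by (simp add: mult.assoc)
  qed
  then have "norm (sqrt_step B Y - sqrt_step B Z) \<le> \<rho> * norm (Y - Z)"
    using order_trans[OF norm_ge_zero nY] by (intro norm_blinfun_bound) auto
  then show ?thesis by (simp add: dist_norm)
qed

lemma norm_Blinfun_adj_le:
  assumes "bounded_op (blinfun_apply Y)"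
  shows "norm (Blinfun (adj Y)) \<le> norm Y"
proof (rule norm_blinfun_bound)
  show "norm (blinfun_apply (Blinfun (adj Y)) x) \<le> norm Y * norm x" for x
    using norm_adj_le[OF assms norm_ge_zero norm_blinfun]
    by (simp add: Blinfun_bounded_op[OF adj_bounded[OF assms]])
qed simp

lemma sqrt_step_fixpoint_adj:
  assumes B: "selfadjoint_op B" and Y: "Y \<in> sqrt_domain B \<rho>" "sqrt_step B Y = Y"
  shows "Blinfun (adj Y) \<in> sqrt_domain B \<rho>" and "sqrt_step B (Blinfun (adj Y)) = Blinfun (adj Y)"
proof -
  have bB: "bounded_op B" "adj B = B" using B by (auto simp: selfadjoint_op_def)
  define y where "y = blinfun_apply Y"
  have cy: "clinear_op y" and ny: "norm Y \<le> \<rho>" and y_bic: "y \<in> bicommutant B"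
    using Y(1) by (auto simp: sqrt_domain_def y_def)
  have bdy: "bounded_op y" using cy by (simp add: y_def bounded_op_blinfun_apply)
  have bay: "bounded_op (adj y)" using bdy by (rule adj_bounded)
  have adj_y: "blinfun_apply (Blinfun (adj y)) = adj y" using bay by (rule Blinfun_bounded_op)
  from sqrt_step_apply(1)[OF bB(1) cy[unfolded y_def]]
  have "y = (\<lambda>x. (1/2) *\<^sub>R (B x + y (y x)))" unfolding Y(2) y_def .
  then have "adj y = adj (\<lambda>x. (1/2) *\<^sub>R (B x + (y \<circ> y) x))"
    unfolding comp_apply by (rule arg_cong)
  also have "\<dots> = (\<lambda>x. (1/2) *\<^sub>R (adj (\<lambda>x. B x + (y \<circ> y) x) x))"
    by (rule adj_scaleR) (intro bounded_op_add bB(1) bounded_op_comp bdy)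
  also have "adj (\<lambda>x. B x + (y \<circ> y) x) = (\<lambda>x. adj B x + adj (y \<circ> y) x)"
    by (rule adj_add) (intro bB(1) bounded_op_comp bdy)+
  also have "adj (y \<circ> y) = adj y \<circ> adj y" by (rule adj_comp[OF bdy bdy])
  finally have adj_y_eq: "adj y = (\<lambda>x. (1/2) *\<^sub>R (B x + adj y (adj y x)))"
    unfolding bB(2) comp_apply .
  have "norm (Blinfun (adj y)) \<le> \<rho>"
    using norm_Blinfun_adj_le[of Y] bdy ny by (simp add: y_def)
  then show mem: "Blinfun (adj y) \<in> sqrt_domain B \<rho>"
    using adj_mem_bicommutant[OF B y_bic bdy] bay
    by (simp add: sqrt_domain_def adj_y bounded_op_clinear)
  show "sqrt_step B (Blinfun (adj y)) = Blinfun (adj y)"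
  proof (rule blinfun_eqI)
    fix x
    have "clinear_op (blinfun_apply (Blinfun (adj y)))" using mem by (simp add: sqrt_domain_def)
    then have "blinfun_apply (sqrt_step B (Blinfun (adj y))) x = (1/2) *\<^sub>R (B x + adj y (adj y x))"
      by (simp add: sqrt_step_apply(1)[OF bB(1)] adj_y)
    also have "\<dots> = adj y x" by (rule fun_cong[OF adj_y_eq, symmetric])
    finally show "blinfun_apply (sqrt_step B (Blinfun (adj y))) x = blinfun_apply (Blinfun (adj y)) x"
      by (simp only: adj_y)
  qed
qed

lemma selfadjoint_half_square_fixpoint:
  assumes B: "selfadjoint_op B" "\<And>x. norm (B x) \<le> \<beta> * norm x" and \<beta>: "0 \<le> \<beta>" "\<beta> < 1"
  obtains Y where "selfadjoint_op Y" "Y \<in> bicommutant B" "\<And>x. 2 *\<^sub>R Y x = B x + Y (Y x)"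
proof -
  have bB: "bounded_op B" using B(1) by (simp add: selfadjoint_op_def)
  define \<rho> where "\<rho> = 1 - sqrt (1 - \<beta>)"
  have \<rho>: "0 \<le> \<rho>" "\<rho> < 1" using \<beta> by (auto simp: \<rho>_def)
  have "\<beta> + \<rho>\<^sup>2 = 2 * \<rho>"
    using \<beta> by (simp add: \<rho>_def power2_eq_square algebra_simps)
  then have maps: "sqrt_step B ` sqrt_domain B \<rho> \<subseteq> sqrt_domain B \<rho>"
    using sqrt_step_mem[OF bB B(2) \<beta>(1)] by auto
  have "\<exists>!Y\<in>sqrt_domain B \<rho>. sqrt_step B Y = Y"
  proof (rule Banach_fix[OF _ _ \<rho> maps])
    show "complete (sqrt_domain B \<rho>)" by (simp add: complete_eq_closed closed_sqrt_domain)
    show "sqrt_domain B \<rho> \<noteq> {}" using zero_in_sqrt_domain[OF \<rho>(1)] by blast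
  qed (rule sqrt_step_contraction[OF bB])
  then obtain Y where Y: "Y \<in> sqrt_domain B \<rho>" "sqrt_step B Y = Y"
    and unique: "\<And>Z. Z \<in> sqrt_domain B \<rho> \<Longrightarrow> sqrt_step B Z = Z \<Longrightarrow> Z = Y" by blast
  have cY: "clinear_op (blinfun_apply Y)" and bY: "bounded_op (blinfun_apply Y)"
    using Y(1) by (auto simp: sqrt_domain_def bounded_op_blinfun_apply)
  \<comment> \<open>the adjoint of the fixed point is again a fixed point, hence equal to it\<close>
  have "Blinfun (adj Y) = Y" using sqrt_step_fixpoint_adj[OF B(1) Y] by (rule unique)
  then have "adj Y = blinfun_apply Y" using Blinfun_bounded_op[OF adj_bounded[OF bY]] by metis
  then have "selfadjoint_op (blinfun_apply Y)" using bY by (simp add: selfadjoint_op_def)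
  moreover have "blinfun_apply Y \<in> bicommutant B" using Y(1) by (simp add: sqrt_domain_def)
  moreover have "2 *\<^sub>R Y x = B x + Y (Y x)" for x
  proof -
    from fun_cong[OF sqrt_step_apply(1)[OF bB cY], of x]
    have "Y x = (1/2) *\<^sub>R (B x + Y (Y x))" unfolding Y(2) .
    then have "2 *\<^sub>R Y x = 2 *\<^sub>R ((1/2) *\<^sub>R (B x + Y (Y x)))" by (rule arg_cong)
    then show ?thesis by simp
  qed
  ultimately show thesis by (rule that)
qed

lemma selfadjoint_sqrt_ident_minus:
  assumes B: "selfadjoint_op B" "\<And>x. norm (B x) \<le> \<beta> * norm x" and \<beta>: "0 \<le> \<beta>" "\<beta> < 1"
  obtains S where "selfadjoint_op S" "S \<circ> S = (\<lambda>x. x - B x)" "S \<in> bicommutant B"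
proof -
  obtain Y where sY: "selfadjoint_op Y" and Y_bic: "Y \<in> bicommutant B"
    and Y: "\<And>x. 2 *\<^sub>R Y x = B x + Y (Y x)"
    using B \<beta> by (rule selfadjoint_half_square_fixpoint) blast
  have bY: "bounded_op Y" "adj Y = Y" using sY by (auto simp: selfadjoint_op_def)
  have "bounded_op (\<lambda>x. x - Y x)" by (intro bounded_op_diff bounded_op_ident bY(1))
  moreover have "adj (\<lambda>x. x - Y x) = (\<lambda>x. x - Y x)"
    using bY by (simp add: adj_diff adj_ident bounded_op_ident)
  ultimately have "selfadjoint_op (\<lambda>x. x - Y x)" by (simp add: selfadjoint_op_def)
  moreover have "(\<lambda>x. x - Y x) \<circ> (\<lambda>x. x - Y x) = (\<lambda>x. x - B x)"
  proof
    fix x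
    have "x - Y x - Y (x - Y x) = x - 2 *\<^sub>R Y x + Y (Y x)"
      using bounded_op_clinear[OF bY(1)] by (simp add: clinear_diff scaleR_2 algebra_simps)
    then show "((\<lambda>x. x - Y x) \<circ> (\<lambda>x. x - Y x)) x = x - B x" by (simp add: Y)
  qed
  moreover have "(\<lambda>x. x - Y x) \<in> bicommutant B"
    unfolding bicommutant_def
  proof (intro CollectI allI impI)
    fix X assume X: "bounded_op X" "X \<circ> B = B \<circ> X"
    then have "X \<circ> Y = Y \<circ> X" by (rule bicommutantD[OF Y_bic])
    then show "X \<circ> (\<lambda>x. x - Y x) = (\<lambda>x. x - Y x) \<circ> X"
      using bounded_op_clinear[OF X(1)] by (auto simp: fun_eq_iff clinear_diff)
  qed
  ultimately show thesis by (rule that)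
qed

lemma selfadjoint_ident_minus_scaled:
  assumes A: "selfadjoint_op A"
    and lower: "\<And>x. m * (norm x)\<^sup>2 \<le> Re (cinner (A x) x)"
    and upper: "\<And>x. Re (cinner (A x) x) \<le> M * (norm x)\<^sup>2" and m: "0 < m" "m \<le> M"
  shows "selfadjoint_op (\<lambda>x. x - (1 / M) *\<^sub>R A x)"
    and "norm (x - (1 / M) *\<^sub>R A x) \<le> (1 - m / M) * norm x"
proof -
  have "M > 0" using m by simp
  have bA: "bounded_op A" "adj A = A" using A by (auto simp: selfadjoint_op_def)
  show sB: "selfadjoint_op (\<lambda>x. x - (1 / M) *\<^sub>R A x)"
    using bA by (simp add: selfadjoint_op_def adj_diff adj_scaleR adj_ident bounded_op_ident
        bounded_op_scaleR bounded_op_diff)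
  have Re_B: "Re (cinner (y - (1 / M) *\<^sub>R A y) y) = (norm y)\<^sup>2 - Re (cinner (A y) y) / M" for y
    by (simp add: cinner_diff_left cinner_scaleR_left Re_cinner_self)
  show "norm (x - (1 / M) *\<^sub>R A x) \<le> (1 - m / M) * norm x"
  proof (rule positive_selfadjoint_norm_le[OF sB])
    show "0 \<le> Re (cinner (y - (1 / M) *\<^sub>R A y) y)" for y
      using upper[of y] \<open>M > 0\<close> by (simp add: Re_B field_simps)
    show "Re (cinner (y - (1 / M) *\<^sub>R A y) y) \<le> (1 - m / M) * (norm y)\<^sup>2" for y
      using lower[of y] \<open>M > 0\<close> by (simp add: Re_B field_simps)
  qed (use m in \<open>simp add: field_simps\<close>)
qed

lemma selfadjoint_sqrt:
  assumes A: "selfadjoint_op A"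
    and lower: "\<And>x. m * (norm x)\<^sup>2 \<le> Re (cinner (A x) x)"
    and upper: "\<And>x. Re (cinner (A x) x) \<le> M * (norm x)\<^sup>2" and m: "0 < m" "m \<le> M"
  obtains D where "selfadjoint_op D" "D \<circ> D = A" "D \<in> bicommutant A"
proof -
  have "M > 0" using m by simp
  \<comment> \<open>\<open>A = M (I - B)\<close> with \<open>\<parallel>B\<parallel> \<le> 1 - m / M < 1\<close>\<close>
  define B where "B x = x - (1 / M) *\<^sub>R A x" for x
  have "0 \<le> 1 - m / M" "1 - m / M < 1" using m by (simp_all add: field_simps)
  with selfadjoint_ident_minus_scaled[OF A lower upper m]
  obtain S where sS: "selfadjoint_op S" and SS: "S \<circ> S = (\<lambda>x. x - B x)"
    and S_bic: "S \<in> bicommutant B"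
    unfolding B_def[abs_def] by (rule selfadjoint_sqrt_ident_minus) blast
  have cS: "clinear_op S" using sS by (simp add: selfadjoint_op_def bounded_op_clinear)
  have "selfadjoint_op (\<lambda>x. sqrt M *\<^sub>R S x)"
    using sS by (simp add: selfadjoint_op_def bounded_op_scaleR adj_scaleR)
  moreover have "(\<lambda>x. sqrt M *\<^sub>R S x) \<circ> (\<lambda>x. sqrt M *\<^sub>R S x) = A"
  proof
    fix x
    have "S (S x) = (1 / M) *\<^sub>R A x" using fun_cong[OF SS, of x] by (simp add: B_def)
    then show "((\<lambda>x. sqrt M *\<^sub>R S x) \<circ> (\<lambda>x. sqrt M *\<^sub>R S x)) x = A x"
      using \<open>M > 0\<close> cS by (simp add: clinear_scaleR)
  qed
  moreover have "(\<lambda>x. sqrt M *\<^sub>R S x) \<in> bicommutant A"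
    unfolding bicommutant_def
  proof (intro CollectI allI impI)
    fix X assume X: "bounded_op X" "X \<circ> A = A \<circ> X"
    have cX: "clinear_op X" using X(1) by (rule bounded_op_clinear)
    have "X \<circ> B = B \<circ> X" using cX X(2) by (auto simp: fun_eq_iff B_def clinear_diff clinear_scaleR)
    then have "X \<circ> S = S \<circ> X" by (rule bicommutantD[OF S_bic X(1)])
    then show "X \<circ> (\<lambda>x. sqrt M *\<^sub>R S x) = (\<lambda>x. sqrt M *\<^sub>R S x) \<circ> X"
      using cX by (auto simp: fun_eq_iff clinear_scaleR)
  qed
  ultimately show thesis by (rule that)
qed

section \<open>Polar decomposition in \<open>QA\<^sub>r\<close>\<close>

lemma commute_inv:
  assumes "op_invertible D" "X \<circ> D = D \<circ> X"
  shows "X \<circ> inv D = inv D \<circ> X"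
proof
  fix y
  have "X (inv D y) = inv D (D (X (inv D y)))" using assms(1) by simp
  also have "\<dots> = inv D (X y)" using comp_commute_apply[OF assms(2), of "inv D y"] assms(1) by simp
  finally show "(X \<circ> inv D) y = (inv D \<circ> X) y" by simp
qed

lemma commute_comp_inv:
  assumes D: "op_invertible D" and "X \<circ> T = T \<circ> X" "X \<circ> D = D \<circ> X"
  shows "X \<circ> (T \<circ> inv D) = (T \<circ> inv D) \<circ> X"
proof -
  have "X \<circ> inv D = inv D \<circ> X" using D assms(3) by (rule commute_inv)
  then show ?thesis using assms(2) by (simp add: fun_eq_iff comp_commute_apply)
qed

lemma op_invertible_if_square:
  assumes D: "bounded_op D" and DD: "op_invertible (D \<circ> D)"
  shows "op_invertible D"
proof -
  \<comment> \<open>\<open>(D\<^sup>2)\<^sup>-\<^sup>1 D\<close> is a left and \<open>D (D\<^sup>2)\<^sup>-\<^sup>1\<close> a right inverse of \<open>D\<close>, so they agree\<close>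
  have left: "inv (D \<circ> D) (D (D x)) = x" and right: "D (D (inv (D \<circ> D) x)) = x" for x
    using inv_op_apply[OF DD] op_inv_apply[OF DD] by simp_all
  have "inv (D \<circ> D) (D x) = D (inv (D \<circ> D) x)" for x
    by (metis left right)
  then show ?thesis
    using left right D op_invertible_inv_bounded[OF DD]
    by (intro op_invertible_intro[where S="D \<circ> inv (D \<circ> D)"]) (auto simp: bounded_op_comp fun_eq_iff)
qed

lemma
  assumes "op_invertible T"
  shows adj_inv_adj_apply: "adj (inv T) (adj T x) = x"
    and adj_adj_inv_apply: "adj T (adj (inv T) x) = x"
proof -
  have bT: "bounded_op T" "bounded_op (inv T)"
    using assms by (simp_all add: op_invertible_bounded op_invertible_inv_bounded)
  have "T \<circ> inv T = (\<lambda>x. x)" "inv T \<circ> T = (\<lambda>x. x)" using assms by (auto simp: fun_eq_iff)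
  then have "adj (inv T) \<circ> adj T = (\<lambda>x. x)" "adj T \<circ> adj (inv T) = (\<lambda>x. x)"
    by (metis adj_comp adj_ident bT)+
  then show "adj (inv T) (adj T x) = x" "adj T (adj (inv T) x) = x" by (metis comp_apply)+
qed

lemma op_invertible_adj: "op_invertible T \<Longrightarrow> op_invertible (adj T)"
  by (rule op_invertible_intro[where S="adj (inv T)"])
    (auto simp: fun_eq_iff adj_bounded op_invertible_bounded op_invertible_inv_bounded
      adj_inv_adj_apply adj_adj_inv_apply)

lemma selfadjoint_adj_comp_self: "bounded_op T \<Longrightarrow> selfadjoint_op (adj T \<circ> T)"
  unfolding selfadjoint_op_def
  by (simp add: bounded_op_comp adj_bounded adj_comp adj_adj comp_assoc)

lemma Re_cinner_adj_comp_self: "bounded_op T \<Longrightarrow> Re (cinner (adj T (T x)) x) = (norm (T x))\<^sup>2"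
  by (simp add: adj_cinner_left Re_cinner_self)

lemma norm_eq_if_square_eq_adj_comp_self:
  assumes D: "selfadjoint_op D" "D \<circ> D = adj T \<circ> T" and T: "bounded_op T"
  shows "norm (D x) = norm (T x)"
proof (rule norm_eq_if_cinner_self_eq)
  have "cinner (T x) (T x) = cinner x (adj T (T x))" by (rule adj_cinner[OF T])
  then show "cinner (D x) (D x) = cinner (T x) (T x)"
    using fun_cong[OF D(2), of x] by (simp add: selfadjoint_cinner[OF D(1)])
qed

lemma unitary_comp_inv_abs:
  assumes T: "op_invertible T" and D: "selfadjoint_op D" "op_invertible D" "D \<circ> D = adj T \<circ> T"
  shows "unitary_op (T \<circ> inv D)"
proof -
  have bT: "bounded_op T" using T by (rule op_invertible_bounded)
  have biD: "bounded_op (inv D)" using D(2) by (rule op_invertible_inv_bounded)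
  have DD: "D (D x) = adj T (T x)" for x using fun_cong[OF D(3)] by simp
  have "adj (T \<circ> inv D) = adj (inv D) \<circ> adj T" by (rule adj_comp[OF bT biD])
  also have "adj (inv D) = inv D" using selfadjoint_inv[OF D(1,2)] by (simp add: selfadjoint_op_def)
  finally have adj_U: "adj (T \<circ> inv D) x = inv D (adj T x)" for x by (metis comp_apply)
  have "adj (T \<circ> inv D) ((T \<circ> inv D) x) = x" for x
    using D(2) by (simp add: adj_U DD[symmetric])
  moreover have "(T \<circ> inv D) (adj (T \<circ> inv D) x) = x" for x
  proof -
    define w where "w = inv D (inv D (adj T x))"
    \<comment> \<open>\<open>T\<^sup>* T w = D\<^sup>2 w = T\<^sup>* x\<close>, and \<open>T\<^sup>*\<close> is injective\<close>
    have "adj T (T w) = adj T x" using D(2) by (simp add: w_def DD[symmetric])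
    then have "T w = x" using adj_inv_adj_apply[OF T] by metis
    then show ?thesis by (simp add: adj_U w_def)
  qed
  ultimately show ?thesis
    by (simp add: unitary_op_def fun_eq_iff bounded_op_comp bT biD)
qed

lemma polar_decomposition_QA:
  assumes T: "op_invertible T" "T \<in> QA r" and r: "0 < r" "r < 1"
  obtains D where "selfadjoint_op D" "D \<circ> D = adj T \<circ> T" "D \<in> bicommutant (adj T \<circ> T)"
    "op_invertible D" "unitary_op (T \<circ> inv D)" "op_spectrum D \<subseteq> closure (annulus r)"
proof -
  have bT: "bounded_op T" using T(1) by (rule op_invertible_bounded)
  have norm_T: "r * norm (T x) \<le> norm x" and norm_inv: "r * norm (inv T x) \<le> norm x" for x
    using T r by (simp_all add: QA_iff_norm_bounds)
  have lower: "r\<^sup>2 * (norm x)\<^sup>2 \<le> Re (cinner ((adj T \<circ> T) x) x)" for x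
    using norm_inv[of "T x"] T(1) r
    by (simp add: Re_cinner_adj_comp_self[OF bT] power_mono flip: power_mult_distrib)
  have upper: "Re (cinner ((adj T \<circ> T) x) x) \<le> (1 / r\<^sup>2) * (norm x)\<^sup>2" for x
    using norm_T[of x] r
    by (simp add: Re_cinner_adj_comp_self[OF bT] power_mono field_simps flip: power_mult_distrib)
  have r2: "0 < r\<^sup>2" "r\<^sup>2 \<le> 1 / r\<^sup>2"
  proof -
    have "r\<^sup>2 * r\<^sup>2 \<le> 1 * 1" using r by (intro mult_mono) (auto simp: power_le_one)
    then show "r\<^sup>2 \<le> 1 / r\<^sup>2" using r by (simp add: field_simps)
  qed (use r in simp)
  obtain D where sD: "selfadjoint_op D" and DD: "D \<circ> D = adj T \<circ> T"
    and D_bic: "D \<in> bicommutant (adj T \<circ> T)"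
    by (rule selfadjoint_sqrt[OF selfadjoint_adj_comp_self[OF bT] lower upper r2]) blast
  have bD: "bounded_op D" using sD by (simp add: selfadjoint_op_def)
  have "op_invertible (D \<circ> D)"
    unfolding DD using T(1) by (intro op_invertible_comp op_invertible_adj)
  then have iD: "op_invertible D" by (rule op_invertible_if_square[OF bD])
  have uU: "unitary_op (T \<circ> inv D)" using T(1) sD iD DD by (rule unitary_comp_inv_abs)
  have "op_spectrum D \<subseteq> closure (annulus r)"
  proof (rule op_spectrum_subset_closure_annulus[OF iD r])
    show "r * norm (D x) \<le> norm x" for x
      using norm_T[of x] norm_eq_if_square_eq_adj_comp_self[OF sD DD bT, of x] by simp
    show "r * norm (inv D x) \<le> norm x" for x
    proof -
      have "norm (T (inv D x)) = norm x" using unitary_isometry(1)[OF uU, of x] by simp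
      then show ?thesis using norm_inv[of "T (inv D x)"] T(1) by simp
    qed
  qed
  with sD DD D_bic iD uU show thesis by (rule that)
qed

lemma unitary_op_invertible: "unitary_op U \<Longrightarrow> op_invertible U"
  unfolding unitary_op_def by (auto intro: op_invertible_intro adj_bounded)

lemma unitary_comp_selfadjoint_QA:
  assumes U: "unitary_op U" and D: "selfadjoint_op D" "op_spectrum D \<subseteq> closure (annulus r)"
    and r: "0 < r" "r < 1"
  shows "U \<circ> D \<in> QA r"
proof -
  have iD: "op_invertible D" using r D(2) by (rule op_invertible_if_spectrum_annulus)
  have iUD: "op_invertible (U \<circ> D)" using unitary_op_invertible[OF U] iD by (rule op_invertible_comp)
  have U_adj: "U (adj U x) = x" "adj U (U x) = x" for x using U by (auto simp: unitary_op_def fun_eq_iff)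
  have "inv (U \<circ> D) = inv D \<circ> adj U"
    using iD by (intro inv_eq_if_inverse) (auto simp: fun_eq_iff U_adj)
  moreover note selfadjoint_norm_bounds_if_spectrum_annulus[OF D(1) r D(2)]
  then have "r * norm (inv D (adj U x)) \<le> norm x" for x
    by (metis unitary_isometry(2)[OF U])
  ultimately show ?thesis
    using selfadjoint_norm_bounds_if_spectrum_annulus[OF D(1) r D(2)] r iUD
    by (simp add: QA_iff_norm_bounds unitary_isometry[OF U])
qed

section \<open>Doubly commuting tuples\<close>

lemma abs_factors_commute:
  assumes S: "bounded_op S" and T: "bounded_op T"
    and ST: "S \<circ> T = T \<circ> S" and S_adj_T: "S \<circ> adj T = adj T \<circ> S" and T_adj_S: "T \<circ> adj S = adj S \<circ> T"
    and D: "D \<in> bicommutant (adj S \<circ> S)" "bounded_op D" and E: "E \<in> bicommutant (adj T \<circ> T)"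
  shows "D \<circ> T = T \<circ> D" and "D \<circ> E = E \<circ> D"
proof -
  note ST' = comp_commute_apply[OF ST] and S_adj_T' = comp_commute_apply[OF S_adj_T]
    and T_adj_S' = comp_commute_apply[OF T_adj_S]
    and adj_ST' = comp_commute_apply[OF adj_commute[OF S T ST]]
  have "T \<circ> (adj S \<circ> S) = (adj S \<circ> S) \<circ> T" by (simp add: fun_eq_iff T_adj_S' ST')
  then have DT: "T \<circ> D = D \<circ> T" by (rule bicommutantD[OF D(1) T])
  have "adj T \<circ> (adj S \<circ> S) = (adj S \<circ> S) \<circ> adj T" by (simp add: fun_eq_iff adj_ST' S_adj_T')
  then have adj_TD: "adj T \<circ> D = D \<circ> adj T" by (rule bicommutantD[OF D(1) adj_bounded[OF T]])
  have "D (adj T (T x)) = adj T (T (D x))" for x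
    using comp_commute_apply[OF DT, of x] comp_commute_apply[OF adj_TD, of "T x"] by simp
  then have "D \<circ> (adj T \<circ> T) = (adj T \<circ> T) \<circ> D" by (simp add: fun_eq_iff)
  then have "D \<circ> E = E \<circ> D" by (rule bicommutantD[OF E D(2)])
  with DT show "D \<circ> T = T \<circ> D" "D \<circ> E = E \<circ> D" by simp_all
qed

lemma polar_unitaries_commute:
  assumes D: "op_invertible D" and E: "op_invertible E"
    and ST: "S \<circ> T = T \<circ> S" and DT: "D \<circ> T = T \<circ> D" and ES: "E \<circ> S = S \<circ> E" and DE: "D \<circ> E = E \<circ> D"
  shows "(S \<circ> inv D) \<circ> (T \<circ> inv E) = (T \<circ> inv E) \<circ> (S \<circ> inv D)"
proof -
  have "T \<circ> inv D = inv D \<circ> T" using D DT[symmetric] by (rule commute_inv)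
  moreover have "S \<circ> inv E = inv E \<circ> S" using E ES[symmetric] by (rule commute_inv)
  moreover have "inv E \<circ> inv D = inv D \<circ> inv E"
  proof (rule commute_inv[OF D])
    show "inv E \<circ> D = D \<circ> inv E" using commute_inv[OF E DE] by simp
  qed
  ultimately have T_invD: "T (inv D x) = inv D (T x)" and S_invE: "S (inv E x) = inv E (S x)"
    and invs: "inv E (inv D x) = inv D (inv E x)" for x
    by (simp_all add: comp_commute_apply)
  have "S (inv D (T (inv E x))) = T (inv E (S (inv D x)))" for x
  proof -
    have "S (inv D (T (inv E x))) = S (T (inv E (inv D x)))" by (simp add: T_invD invs)
    also have "\<dots> = T (S (inv E (inv D x)))" by (simp add: comp_commute_apply[OF ST])
    also have "\<dots> = T (inv E (S (inv D x)))" by (simp add: S_invE)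
    finally show ?thesis .
  qed
  then show ?thesis by (simp add: fun_eq_iff)
qed

lemma polar_products_doubly_commute:
  assumes U: "unitary_op U" and V: "unitary_op V" and D: "selfadjoint_op D" and E: "selfadjoint_op E"
    and UV: "U \<circ> V = V \<circ> U" and DE: "D \<circ> E = E \<circ> D" and DV: "D \<circ> V = V \<circ> D" and EU: "E \<circ> U = U \<circ> E"
  shows "(U \<circ> D) \<circ> (V \<circ> E) = (V \<circ> E) \<circ> (U \<circ> D)"
    and "(U \<circ> D) \<circ> adj (V \<circ> E) = adj (V \<circ> E) \<circ> (U \<circ> D)"
proof -
  have bV: "bounded_op V" using V by (simp add: unitary_op_def)
  have bE: "bounded_op E" "adj E = E" using E by (auto simp: selfadjoint_op_def)
  have "inv V = adj V" using V by (intro inv_eq_if_inverse) (simp_all add: unitary_op_def)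
  then have "U \<circ> adj V = adj V \<circ> U" "D \<circ> adj V = adj V \<circ> D"
    using commute_inv[OF unitary_op_invertible[OF V]] UV DV by metis+
  note U_adjV = comp_commute_apply[OF this(1)] and D_adjV = comp_commute_apply[OF this(2)]
  note UV' = comp_commute_apply[OF UV] and DE' = comp_commute_apply[OF DE]
    and DV' = comp_commute_apply[OF DV] and EU' = comp_commute_apply[OF EU]
  have "adj (V \<circ> E) = E \<circ> adj V" using adj_comp[OF bV bE(1)] bE(2) by simp
  moreover have "U (D (E (adj V x))) = E (adj V (U (D x)))" for x
    by (simp add: DE' flip: EU') (simp add: D_adjV U_adjV)
  ultimately show "(U \<circ> D) \<circ> adj (V \<circ> E) = adj (V \<circ> E) \<circ> (U \<circ> D)"
    by (simp add: fun_eq_iff)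
  have "U (D (V (E x))) = V (E (U (D x)))" for x
  proof -
    have "U (D (V (E x))) = V (U (D (E x)))" by (simp add: DV' UV')
    also have "\<dots> = V (E (U (D x)))" by (simp add: DE' EU')
    finally show ?thesis .
  qed
  then show "(U \<circ> D) \<circ> (V \<circ> E) = (V \<circ> E) \<circ> (U \<circ> D)" by (simp add: fun_eq_iff)
qed

lemma polar_decomposition_QA_tuple:
  assumes r: "0 < r" "r < 1"
    and T: "\<forall>j\<in>{1..d}. op_invertible (T j)" and QA: "\<forall>j\<in>{1..d}. T j \<in> QA r"
  obtains D where "\<And>j. j \<in> {1..d} \<Longrightarrow> selfadjoint_op (D j)"
    "\<And>j. j \<in> {1..d} \<Longrightarrow> D j \<in> bicommutant (adj (T j) \<circ> T j)"
    "\<And>j. j \<in> {1..d} \<Longrightarrow> op_invertible (D j)"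
    "\<And>j. j \<in> {1..d} \<Longrightarrow> unitary_op (T j \<circ> inv (D j))"
    "\<And>j. j \<in> {1..d} \<Longrightarrow> op_spectrum (D j) \<subseteq> closure (annulus r)"
proof -
  have "\<forall>j\<in>{1..d}. \<exists>Dj. selfadjoint_op Dj \<and> Dj \<in> bicommutant (adj (T j) \<circ> T j) \<and>
      op_invertible Dj \<and> unitary_op (T j \<circ> inv Dj) \<and> op_spectrum Dj \<subseteq> closure (annulus r)"
  proof
    fix j assume "j \<in> {1..d}"
    then have "op_invertible (T j)" "T j \<in> QA r" using T QA by simp_all
    then obtain Dj where "selfadjoint_op Dj" "Dj \<in> bicommutant (adj (T j) \<circ> T j)" "op_invertible Dj"
      "unitary_op (T j \<circ> inv Dj)" "op_spectrum Dj \<subseteq> closure (annulus r)"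
      using r by (rule polar_decomposition_QA)
    then show "\<exists>Dj. selfadjoint_op Dj \<and> Dj \<in> bicommutant (adj (T j) \<circ> T j) \<and>
      op_invertible Dj \<and> unitary_op (T j \<circ> inv Dj) \<and> op_spectrum Dj \<subseteq> closure (annulus r)"
      by blast
  qed
  from bchoice[OF this] obtain D where "\<forall>j\<in>{1..d}. selfadjoint_op (D j) \<and>
      D j \<in> bicommutant (adj (T j) \<circ> T j) \<and> op_invertible (D j) \<and>
      unitary_op (T j \<circ> inv (D j)) \<and> op_spectrum (D j) \<subseteq> closure (annulus r)"
    by blast
  then show thesis by (intro that[of D]) simp_all
qed

lemma doubly_commuting_abs_factors_commute:
  assumes dc: "doubly_commuting d T" and T: "\<forall>j\<in>{1..d}. op_invertible (T j)"
    and ij: "i \<in> {1..d}" "j \<in> {1..d}" "i \<noteq> j"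
    and D: "D \<in> bicommutant (adj (T i) \<circ> T i)" "bounded_op D" and E: "E \<in> bicommutant (adj (T j) \<circ> T j)"
  shows "D \<circ> T j = T j \<circ> D" and "D \<circ> E = E \<circ> D"
proof -
  have "bounded_op (T i)" "bounded_op (T j)" using T ij by (simp_all add: op_invertible_bounded)
  moreover have "T i \<circ> T j = T j \<circ> T i" "T i \<circ> adj (T j) = adj (T j) \<circ> T i"
    "T j \<circ> adj (T i) = adj (T i) \<circ> T j"
    using dc ij by (auto simp: doubly_commuting_def commuting_tuple_def)
  ultimately show "D \<circ> T j = T j \<circ> D" "D \<circ> E = E \<circ> D"
    using abs_factors_commute[OF _ _ _ _ _ D E] by blast+
qed

lemma polar_tuple_if_doubly_commuting_QA:
  assumes r: "0 < r" "r < 1" and T: "\<forall>j\<in>{1..d}. op_invertible (T j)"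
    and dc: "doubly_commuting d T" and QA: "\<forall>j\<in>{1..d}. T j \<in> QA r"
  shows "\<exists>U D :: nat \<Rightarrow> ('a::chilbert_space \<Rightarrow> 'a).
       (\<forall>j\<in>{1..d}. unitary_op (U j)) \<and> commuting_tuple d U \<and>
       (\<forall>j\<in>{1..d}. selfadjoint_op (D j)) \<and> commuting_tuple d D \<and>
       (\<forall>j\<in>{1..d}. op_spectrum (D j) \<subseteq> closure (annulus r)) \<and>
       (\<forall>i\<in>{1..d}. \<forall>j\<in>{1..d}. i \<noteq> j \<longrightarrow> D i \<circ> U j = U j \<circ> D i) \<and>
       (\<forall>j\<in>{1..d}. T j = U j \<circ> D j)"
proof -
  obtain D where sD: "\<And>j. j \<in> {1..d} \<Longrightarrow> selfadjoint_op (D j)"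
    and D_bic: "\<And>j. j \<in> {1..d} \<Longrightarrow> D j \<in> bicommutant (adj (T j) \<circ> T j)"
    and iD: "\<And>j. j \<in> {1..d} \<Longrightarrow> op_invertible (D j)"
    and uU: "\<And>j. j \<in> {1..d} \<Longrightarrow> unitary_op (T j \<circ> inv (D j))"
    and spectrum: "\<And>j. j \<in> {1..d} \<Longrightarrow> op_spectrum (D j) \<subseteq> closure (annulus r)"
    by (rule polar_decomposition_QA_tuple[OF r T QA]) (rule that)
  define U where "U j = T j \<circ> inv (D j)" for j
  have TT: "T i \<circ> T j = T j \<circ> T i" if "i \<in> {1..d}" "j \<in> {1..d}" for i j
    using dc that by (simp add: doubly_commuting_def commuting_tuple_def)
  have bD: "bounded_op (D j)" if "j \<in> {1..d}" for j using sD[OF that] by (simp add: selfadjoint_op_def)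
  have pair: "D i \<circ> T j = T j \<circ> D i" "D i \<circ> D j = D j \<circ> D i"
    if ij: "i \<in> {1..d}" "j \<in> {1..d}" "i \<noteq> j" for i j
    using doubly_commuting_abs_factors_commute[OF dc T ij D_bic[OF ij(1)] bD[OF ij(1)] D_bic[OF ij(2)]] .
  have "commuting_tuple d D"
    unfolding commuting_tuple_def
  proof (intro ballI)
    fix i j assume ij: "i \<in> {1..d}" "j \<in> {1..d}"
    show "D i \<circ> D j = D j \<circ> D i" by (cases "i = j") (simp_all add: pair(2)[OF ij])
  qed
  moreover have "commuting_tuple d U"
    unfolding commuting_tuple_def U_def
  proof (intro ballI)
    fix i j assume ij: "i \<in> {1..d}" "j \<in> {1..d}"
    show "(T i \<circ> inv (D i)) \<circ> (T j \<circ> inv (D j)) = (T j \<circ> inv (D j)) \<circ> (T i \<circ> inv (D i))"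
    proof (cases "i = j")
      case False
      show ?thesis
        by (rule polar_unitaries_commute[OF iD[OF ij(1)] iD[OF ij(2)] TT[OF ij] pair(1)[OF ij False]
              pair(1)[OF ij(2,1)] pair(2)[OF ij False]]) (use False in simp)
    qed simp
  qed
  moreover have "D i \<circ> U j = U j \<circ> D i" if ij: "i \<in> {1..d}" "j \<in> {1..d}" "i \<noteq> j" for i j
    unfolding U_def using iD[OF ij(2)] pair[OF ij] by (rule commute_comp_inv)
  moreover have "T j = U j \<circ> D j" "unitary_op (U j)" if "j \<in> {1..d}" for j
    using iD[OF that] uU[OF that] by (simp_all add: U_def fun_eq_iff)
  ultimately show ?thesis
    using sD spectrum by (intro exI[of _ U] exI[of _ D]) blast
qed

lemma doubly_commuting_QA_if_polar_tuple:
  assumes r: "0 < r" "r < 1"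
    and U: "\<forall>j\<in>{1..d}. unitary_op (U j)" "commuting_tuple d U"
    and D: "\<forall>j\<in>{1..d}. selfadjoint_op (D j)" "commuting_tuple d D"
      "\<forall>j\<in>{1..d}. op_spectrum (D j) \<subseteq> closure (annulus r)"
    and DU: "\<forall>i\<in>{1..d}. \<forall>j\<in>{1..d}. i \<noteq> j \<longrightarrow> D i \<circ> U j = U j \<circ> D i"
    and T: "\<forall>j\<in>{1..d}. T j = U j \<circ> D j"
  shows "doubly_commuting d T \<and> (\<forall>j\<in>{1..d}. T j \<in> QA r)"
proof -
  have pair: "T i \<circ> T j = T j \<circ> T i \<and> T i \<circ> adj (T j) = adj (T j) \<circ> T i"
    if ij: "i \<in> {1..d}" "j \<in> {1..d}" "i \<noteq> j" for i j
  proof -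
    have "unitary_op (U i)" "unitary_op (U j)" "selfadjoint_op (D i)" "selfadjoint_op (D j)"
      "U i \<circ> U j = U j \<circ> U i" "D i \<circ> D j = D j \<circ> D i"
      "D i \<circ> U j = U j \<circ> D i" "D j \<circ> U i = U i \<circ> D j"
      using U D DU ij by (simp_all add: commuting_tuple_def)
    from polar_products_doubly_commute[OF this] show ?thesis using T ij by simp
  qed
  have "doubly_commuting d T"
    unfolding doubly_commuting_def commuting_tuple_def
  proof (intro conjI ballI impI)
    show "T i \<circ> T j = T j \<circ> T i" if "i \<in> {1..d}" "j \<in> {1..d}" for i j
      using pair[OF that] by (cases "i = j") simp_all
    show "T i \<circ> adj (T j) = adj (T j) \<circ> T i" if "i \<in> {1..d}" "j \<in> {1..d}" "i \<noteq> j" for i j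
      using pair[OF that] by simp
  qed
  moreover have "T j \<in> QA r" if "j \<in> {1..d}" for j
    using unitary_comp_selfadjoint_QA[of "U j" "D j" r] that U D T r by simp
  ultimately show ?thesis by blast
qed

theorem theorem3p10:
  fixes r :: real and d :: nat and T :: "nat \<Rightarrow> ('a::chilbert_space \<Rightarrow> 'a)"
  assumes "0 < r" and "r < 1"
    and "\<forall>j\<in>{1..d}. op_invertible (T j)"
  shows "(doubly_commuting d T \<and> (\<forall>j\<in>{1..d}. T j \<in> QA r)) \<longleftrightarrow>
    (\<exists>U D :: nat \<Rightarrow> ('a \<Rightarrow> 'a).
       (\<forall>j\<in>{1..d}. unitary_op (U j)) \<and> commuting_tuple d U \<and>
       (\<forall>j\<in>{1..d}. selfadjoint_op (D j)) \<and> commuting_tuple d D \<and>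
       (\<forall>j\<in>{1..d}. op_spectrum (D j) \<subseteq> closure (annulus r)) \<and>
       (\<forall>i\<in>{1..d}. \<forall>j\<in>{1..d}. i \<noteq> j \<longrightarrow> D i \<circ> U j = U j \<circ> D i) \<and>
       (\<forall>j\<in>{1..d}. T j = U j \<circ> D j))"
  using polar_tuple_if_doubly_commuting_QA[OF assms]
  by (intro iffI; elim conjE exE) (blast, rule doubly_commuting_QA_if_polar_tuple[OF assms(1,2)])
end
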